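(* Let $d\in\mathbb{N}$. The tent transform $\mathcal{R}$, $\mathcal{R}f(y_1,\dots,y_d)=f(|2y_1-1|,\dots,|2y_d-1|)$, is a continuous mapping from $H^2_{\mathrm{mix}}([0,1]^d)$ to the classical Korobov space $\mathbf{E}^2_d$: there is $C>0$ depending only on $d$ with $\sup_{\mathbf{k}\in\mathbb{Z}^d}|\widehat{\mathcal{R}f}(\mathbf{k})|\prod_{i=1}^d(1+|k_i|)^2\le C\|f\|_{H^2_{\mathrm{mix}}([0,1]^d)}$ for all $f\in H^2_{\mathrm{mix}}([0,1]^d)$.
   Context: $H^2_{\mathrm{mix}}([0,1]^d)$ is the $d$-fold Hilbert tensor product of $H^2([0,1])=\{f\in L_2([0,1]):f''\in L_2([0,1])\}$ with norm $\|f\|^2=\|f\|^2_{L_2}+\|f''\|^2_{L_2}$; equivalently the real functions $f$ on $[0,1]^d$ with $\big(\prod_{i\in e}\partial^2/\partial x_i^2\big)f\in L_2([0,1]^d)$ (weak derivatives) for all $e\subseteq\{1,\dots,d\}$, normed by the square root of the sum of the squared $L_2$-norms of these derivatives. $\mathbb{T}^d$ is identified with $[0,1)^d$; for $g\in L_1(\mathbb{T}^d)$, $\hat g(\mathbf{k})=\int_{[0,1]^d}g(\mathbf{x})e^{-2\pi i\mathbf{k}^\top\mathbf{x}}\,d\mathbf{x}$. The classical Korobov space $\mathbf{E}^2_d=\mathbf{E}^2(\mathbb{T}^d)$ consists of the functions $g$ on $\mathbb{T}^d$ with finite norm $\|g\|_{\mathbf{E}^2_d}=\sup_{\mathbf{k}\in\mathbb{Z}^d}|\hat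 g(\mathbf{k})|\prod_{i=1}^d(1+|k_i|)^2$. *)

theory Defs
  imports "HOL-Analysis.Analysis"
begin

text \<open>Unit cube [0,1]^d and its interior, with d = CARD('n).\<close>
definition unit_cube :: "(real^'n::finite) set" where
  "unit_cube = cbox 0 1"

definition open_unit_cube :: "(real^'n::finite) set" where
  "open_unit_cube = box 0 1"

definition partial :: "'n::finite \<Rightarrow> (real^'n \<Rightarrow> real) \<Rightarrow> real^'n \<Rightarrow> real" where
  "partial i \<phi> x = deriv (\<lambda>t. \<phi> (x + t *\<^sub>R axis i 1)) 0"

fun iter_partial :: "'n::finite list \<Rightarrow> (real^'n \<Rightarrow> real) \<Rightarrow> real^'n \<Rightarrow> real" where
  "iter_partial [] \<phi> = \<phi>"
| "iter_partial (i # is) \<phi> = partial i (iter_partial is \<phi>)"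

definition smooth_fun :: "(real^'n::finite \<Rightarrow> real) \<Rightarrow> bool" where
  "smooth_fun \<phi> \<longleftrightarrow>
     (\<forall>is. continuous_on UNIV (iter_partial is \<phi>) \<and>
       (\<forall>i x. (\<lambda>t. iter_partial is \<phi> (x + t *\<^sub>R axis i 1)) differentiable (at 0)))"

definition test_fun :: "(real^'n::finite \<Rightarrow> real) \<Rightarrow> bool" where
  "test_fun \<phi> \<longleftrightarrow> smooth_fun \<phi> \<and>
     (\<exists>K. compact K \<and> K \<subseteq> open_unit_cube \<and> (\<forall>x. x \<notin> K \<longrightarrow> \<phi> x = 0))"

text \<open>The mixed derivative (\<Prod>i\<in>e. \<partial>^2/\<partial>x_i^2) of a smooth function
  (order of differentiation is irrelevant for smooth functions).\<close>
definition mixed_D2 :: "'n::finite set \<Rightarrow> (real^'n \<Rightarrow> real) \<Rightarrow> real^'n \<Rightarrow> real" where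
  "mixed_D2 e \<phi> = iter_partial (concat (map (\<lambda>i. [i, i]) (SOME l. set l = e \<and> distinct l))) \<phi>"

definition L2_cube :: "(real^'n::finite \<Rightarrow> real) \<Rightarrow> bool" where
  "L2_cube f \<longleftrightarrow> f \<in> borel_measurable (lebesgue_on unit_cube) \<and>
     integrable (lebesgue_on unit_cube) (\<lambda>x. (f x)\<^sup>2)"

text \<open>g is the weak derivative (\<Prod>i\<in>e. \<partial>^2/\<partial>x_i^2) f, and lies in L2.
  The sign (-1)^(2|e|) = 1.\<close>
definition is_weak_mixed_D2 ::
  "'n::finite set \<Rightarrow> (real^'n \<Rightarrow> real) \<Rightarrow> (real^'n \<Rightarrow> real) \<Rightarrow> bool" where
  "is_weak_mixed_D2 e f g \<longleftrightarrow> L2_cube g \<and>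
     (\<forall>\<phi>. test_fun \<phi> \<longrightarrow>
        integrable (lebesgue_on unit_cube) (\<lambda>x. f x * mixed_D2 e \<phi> x) \<and>
        integrable (lebesgue_on unit_cube) (\<lambda>x. g x * \<phi> x) \<and>
        integral\<^sup>L (lebesgue_on unit_cube) (\<lambda>x. f x * mixed_D2 e \<phi> x)
          = integral\<^sup>L (lebesgue_on unit_cube) (\<lambda>x. g x * \<phi> x))"

definition H2mix :: "(real^'n::finite \<Rightarrow> real) \<Rightarrow> bool" where
  "H2mix f \<longleftrightarrow> L2_cube f \<and> (\<forall>e. \<exists>g. is_weak_mixed_D2 e f g)"

definition weak_mixed_D2 :: "'n::finite set \<Rightarrow> (real^'n \<Rightarrow> real) \<Rightarrow> real^'n \<Rightarrow> real" where
  "weak_mixed_D2 e f = (SOME g. is_weak_mixed_D2 e f g)"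

definition H2mix_norm :: "(real^'n::finite \<Rightarrow> real) \<Rightarrow> real" where
  "H2mix_norm f = sqrt (\<Sum>e\<in>UNIV. integral\<^sup>L (lebesgue_on unit_cube) (\<lambda>x. (weak_mixed_D2 e f x)\<^sup>2))"

definition tent :: "(real^'n::finite \<Rightarrow> real) \<Rightarrow> real^'n \<Rightarrow> real" where
  "tent f y = f (\<chi> i. \<bar>2 * y$i - 1\<bar>)"

text \<open>Fourier coefficient on the torus identified with [0,1)^d.\<close>
definition fourier_coeff :: "(real^'n::finite \<Rightarrow> real) \<Rightarrow> int^'n \<Rightarrow> complex" where
  "fourier_coeff g k = integral\<^sup>L (lebesgue_on unit_cube)
     (\<lambda>x. complex_of_real (g x) * cis (- 2 * pi * (\<Sum>i\<in>UNIV. of_int (k$i) * x$i)))"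

end

theory Submission
  imports Defs "HOL-Computational_Algebra.Polynomial"
begin

text \<open>Reflecting in the hyperplanes \<open>x\<^sub>i = 1/2\<close> folds the unit cube onto itself \<open>2\<^sup>d\<close> times, so
  the Fourier coefficient of the tent transform at \<open>k\<close> is the integral of \<open>f\<close> against
  \<open>G\<^sub>k(x) = \<Prod>\<^sub>i cos (pi k\<^sub>i) cos (pi k\<^sub>i x\<^sub>i)\<close>. In each coordinate,
  \<open>cos (pi n) cos (pi n t) = A(t) + R''(t)\<close> with \<open>R\<close> and \<open>R'\<close> vanishing at \<open>0\<close> and \<open>1\<close> and
  \<open>A, R = O((1 + |n|)\<^sup>-\<^sup>2)\<close>. Expanding the product writes \<open>G\<^sub>k\<close> as a sum over \<open>e \<subseteq> {1..d}\<close>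
  of tensor products carrying \<open>R\<^sub>i''\<close> in the coordinates \<open>i \<in> e\<close>. The boundary conditions
  allow moving these second derivatives onto \<open>f\<close>, so each term is at most
  \<open>\<Prod>\<^sub>i (1 + |k\<^sub>i|)\<^sup>-\<^sup>2\<close> times the \<open>L\<^sup>1\<close> norm, hence the \<open>L\<^sup>2\<close> norm, of a weak mixed
  derivative of \<open>f\<close>.\<close>

section \<open>Smooth functions of one real variable\<close>

fun times_differentiable :: "nat \<Rightarrow> (real \<Rightarrow> real) \<Rightarrow> bool" where
  "times_differentiable 0 f \<longleftrightarrow> True"
| "times_differentiable (Suc k) f \<longleftrightarrow>
     (\<forall>x. f field_differentiable at x) \<and> times_differentiable k (deriv f)"

definition smooth_real :: "(real \<Rightarrow> real) \<Rightarrow> bool" where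
  "smooth_real f \<longleftrightarrow> (\<forall>k. times_differentiable k f)"

lemma times_differentiable_Suc_imp: "times_differentiable (Suc k) f \<Longrightarrow> times_differentiable k f"
  by (induction k arbitrary: f) auto

lemma times_differentiable_const: "times_differentiable k (\<lambda>x. c)"
  by (induction k arbitrary: c) auto

lemma times_differentiable_ident: "times_differentiable k (\<lambda>x. x)"
  by (cases k) (auto simp: times_differentiable_const)

lemma times_differentiable_add:
  "times_differentiable k f \<Longrightarrow> times_differentiable k g \<Longrightarrow> times_differentiable k (\<lambda>x. f x + g x)"
proof (induction k arbitrary: f g)
  case (Suc k)
  then have "deriv (\<lambda>x. f x + g x) = (\<lambda>x. deriv f x + deriv g x)" by auto
  with Suc show ?case by (auto intro: field_differentiable_add)
qed simp

lemma times_differentiable_mult: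
  "times_differentiable k f \<Longrightarrow> times_differentiable k g \<Longrightarrow> times_differentiable k (\<lambda>x. f x * g x)"
proof (induction k arbitrary: f g)
  case (Suc k)
  then have "deriv (\<lambda>x. f x * g x) = (\<lambda>x. f x * deriv g x + deriv f x * g x)" by auto
  moreover have "times_differentiable k f" "times_differentiable k g"
    using Suc.prems times_differentiable_Suc_imp by blast+
  then have "times_differentiable k (\<lambda>x. f x * deriv g x + deriv f x * g x)"
    using Suc.prems Suc.IH[of f "deriv g"] Suc.IH[of "deriv f" g]
    by (simp add: times_differentiable_add)
  ultimately show ?case using Suc.prems by (simp add: field_differentiable_mult)
qed simp

lemma times_differentiable_compose:
  "times_differentiable k g \<Longrightarrow> times_differentiable k f \<Longrightarrow> times_differentiable k (\<lambda>x. g (f x))"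
proof (induction k arbitrary: f g)
  case (Suc k)
  then have "deriv (\<lambda>x. g (f x)) = (\<lambda>x. deriv g (f x) * deriv f x)"
    using deriv_chain[of f _ g] by (auto simp: o_def)
  moreover have "times_differentiable k f"
    using Suc.prems times_differentiable_Suc_imp by blast
  then have "times_differentiable k (\<lambda>x. deriv g (f x) * deriv f x)"
    using Suc.prems Suc.IH[of "deriv g" f] by (simp add: times_differentiable_mult)
  ultimately show ?case
    using Suc.prems field_differentiable_compose[of f _ g] by (auto simp: o_def)
qed simp

lemma times_differentiable_minus: "times_differentiable k f \<Longrightarrow> times_differentiable k (\<lambda>x. - f x)"
  using times_differentiable_mult[OF times_differentiable_const[of k "-1"]] by simp

lemma times_differentiable_inverse:
  "times_differentiable k g \<Longrightarrow> (\<forall>x. g x \<noteq> 0) \<Longrightarrow> times_differentiable k (\<lambda>x. inverse (g x))"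
proof (induction k arbitrary: g)
  case (Suc k)
  then have "deriv (\<lambda>x. inverse (g x)) = (\<lambda>x. - (deriv g x * inverse (g x) * inverse (g x)))"
    by (auto simp: power2_eq_square field_simps)
  moreover have "times_differentiable k (\<lambda>x. inverse (g x))"
    using Suc times_differentiable_Suc_imp by blast
  then have "times_differentiable k (\<lambda>x. - (deriv g x * inverse (g x) * inverse (g x)))"
    using Suc.prems by (intro times_differentiable_minus times_differentiable_mult) simp_all
  ultimately show ?case using Suc.prems by (simp add: field_differentiable_inverse)
qed simp

lemma times_differentiable_sin_cos: "times_differentiable k sin \<and> times_differentiable k cos"
proof (induction k)
  case (Suc k)
  have "deriv sin = (cos :: real \<Rightarrow> real)" "deriv cos = (\<lambda>x::real. - sin x)"
    by (auto intro!: ext DERIV_imp_deriv derivative_eq_intros)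
  with Suc show ?case
    by (simp add: times_differentiable_minus field_differentiable_at_sin field_differentiable_at_cos)
qed simp

lemma smooth_real_const: "smooth_real (\<lambda>x. c)"
  by (simp add: smooth_real_def times_differentiable_const)

lemma smooth_real_ident: "smooth_real (\<lambda>x. x)"
  by (simp add: smooth_real_def times_differentiable_ident)

lemma smooth_real_add: "smooth_real f \<Longrightarrow> smooth_real g \<Longrightarrow> smooth_real (\<lambda>x. f x + g x)"
  by (simp add: smooth_real_def times_differentiable_add)

lemma smooth_real_mult: "smooth_real f \<Longrightarrow> smooth_real g \<Longrightarrow> smooth_real (\<lambda>x. f x * g x)"
  by (simp add: smooth_real_def times_differentiable_mult)

lemma smooth_real_minus: "smooth_real f \<Longrightarrow> smooth_real (\<lambda>x. - f x)"
  by (simp add: smooth_real_def times_differentiable_minus)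

lemma smooth_real_diff: "smooth_real f \<Longrightarrow> smooth_real g \<Longrightarrow> smooth_real (\<lambda>x. f x - g x)"
  using smooth_real_add[OF _ smooth_real_minus] by simp

lemma smooth_real_power: "smooth_real f \<Longrightarrow> smooth_real (\<lambda>x. f x ^ k)"
  by (induction k) (simp_all add: smooth_real_const smooth_real_mult)

lemma smooth_real_compose: "smooth_real g \<Longrightarrow> smooth_real f \<Longrightarrow> smooth_real (\<lambda>x. g (f x))"
  by (simp add: smooth_real_def times_differentiable_compose)

lemma smooth_real_affine: "smooth_real f \<Longrightarrow> smooth_real (\<lambda>x. f (c * x + a))"
  using smooth_real_compose[of f "\<lambda>x. c * x + a"]
  by (simp add: smooth_real_add smooth_real_mult smooth_real_const smooth_real_ident)

lemma smooth_real_inverse: "smooth_real g \<Longrightarrow> (\<forall>x. g x \<noteq> 0) \<Longrightarrow> smooth_real (\<lambda>x. inverse (g x))"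
  by (simp add: smooth_real_def times_differentiable_inverse)

lemma smooth_real_cos: "smooth_real cos"
  by (simp add: smooth_real_def times_differentiable_sin_cos)

lemma smooth_real_cos_factor: "smooth_real (\<lambda>t. c * cos (a * t))"
  using smooth_real_mult[OF smooth_real_const smooth_real_affine[OF smooth_real_cos, of a 0]] by simp

lemma smooth_real_deriv: "smooth_real f \<Longrightarrow> smooth_real (deriv f)"
  unfolding smooth_real_def using times_differentiable.simps(2) by blast

lemma smooth_real_funpow_deriv: "smooth_real f \<Longrightarrow> smooth_real ((deriv ^^ n) f)"
  by (induction n) (auto intro: smooth_real_deriv)

lemma smooth_real_field_differentiable: "smooth_real f \<Longrightarrow> f field_differentiable at x"
  unfolding smooth_real_def using times_differentiable.simps(2) by blast

lemma smooth_real_has_deriv: "smooth_real f \<Longrightarrow> (f has_real_derivative deriv f x) (at x)"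
  by (simp add: DERIV_deriv_iff_field_differentiable smooth_real_field_differentiable)

lemma smooth_real_continuous_on: "smooth_real f \<Longrightarrow> continuous_on A f"
  by (meson continuous_at_imp_continuous_on field_differentiable_imp_continuous_at
      smooth_real_field_differentiable)

lemma deriv_affine_smooth_real:
  "smooth_real f \<Longrightarrow> deriv (\<lambda>x. f (c * x + a)) = (\<lambda>x. c * deriv f (c * x + a))"
  by (simp add: fun_eq_iff deriv_compose_linear' smooth_real_field_differentiable)

lemma deriv_reflect_smooth_real:
  assumes "smooth_real g"
  shows "deriv (\<lambda>x. g (1 - x)) t = - deriv g (1 - t)"
    and "deriv (deriv (\<lambda>x. g (1 - x))) t = deriv (deriv g) (1 - t)"
proof -
  have d: "deriv (\<lambda>x. h (1 - x)) = (\<lambda>x. - deriv h (1 - x))" if "smooth_real h" for h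
    using deriv_affine_smooth_real[OF that, of "- 1" 1] by simp
  show "deriv (\<lambda>x. g (1 - x)) t = - deriv g (1 - t)" by (simp add: d assms)
  have "(\<lambda>x. deriv g (1 - x)) field_differentiable at t"
    using smooth_real_affine[OF smooth_real_deriv[OF assms], of "- 1" 1]
    by (simp add: smooth_real_field_differentiable)
  then show "deriv (deriv (\<lambda>x. g (1 - x))) t = deriv (deriv g) (1 - t)"
    by (simp add: d assms smooth_real_deriv)
qed

lemma deriv2_mult_smooth_real:
  assumes "smooth_real f" "smooth_real g"
  shows "deriv (deriv (\<lambda>x. f x * g x)) x =
    deriv (deriv f) x * g x + 2 * deriv f x * deriv g x + f x * deriv (deriv g) x"
proof -
  note d = smooth_real_field_differentiable smooth_real_deriv assms
  have "deriv (\<lambda>x. f x * g x) = (\<lambda>x. f x * deriv g x + deriv f x * g x)"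
    using d by auto
  then show ?thesis using d by (simp add: field_differentiable_mult)
qed

lemma deriv_locally_constant:
  assumes "open A" "x \<in> A" "\<And>y. y \<in> A \<Longrightarrow> f y = c"
  shows "deriv f x = 0" and "deriv (deriv f) x = 0"
proof -
  have "deriv f y = 0" if "y \<in> A" for y
  proof -
    have "eventually (\<lambda>z. f z = c) (nhds y)"
      using assms(1,3) that eventually_nhds by blast
    then show ?thesis using deriv_cong_ev[of f "\<lambda>_. c" y y] by simp
  qed
  then show "deriv f x = 0" using assms(2) .
  have "eventually (\<lambda>z. deriv f z = 0) (nhds x)"
    using assms(1,2) \<open>\<And>y. y \<in> A \<Longrightarrow> deriv f y = 0\<close> eventually_nhds by blast
  then show "deriv (deriv f) x = 0" using deriv_cong_ev[of "deriv f" "\<lambda>_. 0" x x] by simp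
qed

lemma bound_near_double_zero:
  assumes v: "smooth_real v" and v0: "v 0 = 0" "deriv v 0 = 0"
    and V: "\<forall>s\<in>{0..1}. \<bar>deriv (deriv v) s\<bar> \<le> V" and t: "t \<in> {0..1}"
  shows "\<bar>deriv v t\<bar> \<le> V * t" "\<bar>v t\<bar> \<le> V * t\<^sup>2"
proof -
  have d1: "\<bar>deriv v s\<bar> \<le> V * s" if s: "s \<in> {0..1}" for s
  proof (cases "s = 0")
    case False
    then have "0 < s" using s by simp
    from MVT2[OF this, of "deriv v" "deriv (deriv v)"] obtain z where
      z: "0 < z" "z < s" "deriv v s - deriv v 0 = (s - 0) * deriv (deriv v) z"
      using smooth_real_has_deriv[OF smooth_real_deriv[OF v]] by blast
    have "\<bar>deriv (deriv v) z\<bar> \<le> V" using V z s by auto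
    then have "\<bar>s * deriv (deriv v) z\<bar> \<le> s * V" using \<open>0 < s\<close> by (simp add: abs_mult mult_left_mono)
    then show ?thesis using z v0 by (simp add: mult.commute)
  qed (use v0 in simp)
  show "\<bar>deriv v t\<bar> \<le> V * t" using d1[OF t] .
  show "\<bar>v t\<bar> \<le> V * t\<^sup>2"
  proof (cases "t = 0")
    case False
    then have "0 < t" using t by simp
    from MVT2[OF this, of v "deriv v"] obtain z where
      z: "0 < z" "z < t" "v t - v 0 = (t - 0) * deriv v z"
      using smooth_real_has_deriv[OF v] by blast
    have "0 \<le> V" using V by (meson abs_ge_zero atLeastAtMost_iff order_trans zero_le_one order_refl)
    have "\<bar>deriv v z\<bar> \<le> V * z" using d1 z t by auto
    also have "\<dots> \<le> V * t" using z \<open>0 \<le> V\<close> by (intro mult_left_mono) auto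
    finally have "\<bar>t * deriv v z\<bar> \<le> t * (V * t)" using \<open>0 < t\<close> by (simp add: abs_mult mult_left_mono)
    then show ?thesis using z v0 by (simp add: power2_eq_square mult.commute mult.left_commute)
  qed (use v0 in simp)
qed

lemma bound_between_double_zeros:
  assumes v: "smooth_real v" and bc: "v 0 = 0" "deriv v 0 = 0" "v 1 = 0" "deriv v 1 = 0"
    and V: "\<forall>s\<in>{0..1}. \<bar>deriv (deriv v) s\<bar> \<le> V" and t: "t \<in> {0..1}"
  shows "\<bar>deriv v t\<bar> \<le> V * min t (1 - t)" "\<bar>v t\<bar> \<le> V * (min t (1 - t))\<^sup>2"
proof -
  define w where "w = (\<lambda>s. v (1 - s))"
  have w: "smooth_real w" using smooth_real_affine[OF v, of "- 1" 1] by (simp add: w_def)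
  note dw = deriv_reflect_smooth_real[OF v, folded w_def]
  have "\<forall>s\<in>{0..1}. \<bar>deriv (deriv w) s\<bar> \<le> V" using V by (auto simp: dw)
  moreover have "w 0 = 0" "deriv w 0 = 0" using bc by (simp add: w_def, simp add: dw)
  moreover have "1 - t \<in> {0..1}" using t by auto
  ultimately have "\<bar>deriv w (1 - t)\<bar> \<le> V * (1 - t)" "\<bar>w (1 - t)\<bar> \<le> V * (1 - t)\<^sup>2"
    using bound_near_double_zero[OF w] by blast+
  then have "\<bar>deriv v t\<bar> \<le> V * (1 - t)" "\<bar>v t\<bar> \<le> V * (1 - t)\<^sup>2"
    by (simp add: dw, simp add: w_def)
  moreover have "\<bar>deriv v t\<bar> \<le> V * t" "\<bar>v t\<bar> \<le> V * t\<^sup>2"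
    using bound_near_double_zero[OF v bc(1,2) V t] by blast+
  ultimately show "\<bar>deriv v t\<bar> \<le> V * min t (1 - t)" "\<bar>v t\<bar> \<le> V * (min t (1 - t))\<^sup>2"
    by (auto simp: min_def)
qed

section \<open>A smooth step and plateau functions\<close>

definition flat_exp :: "real \<Rightarrow> real" where
  "flat_exp x = (if x > 0 then exp (- inverse x) else 0)"

definition poly_flat_exp :: "real poly \<Rightarrow> real \<Rightarrow> real" where
  "poly_flat_exp p x = (if x > 0 then poly p (inverse x) * exp (- inverse x) else 0)"

lemma poly_times_exp_neg_tendsto_0:
  fixes p :: "real poly" shows "((\<lambda>y. poly p y * exp (- y)) \<longlongrightarrow> 0) at_top"
proof -
  have "((\<lambda>y. \<Sum>i\<le>degree p. coeff p i * (y ^ i / exp y)) \<longlongrightarrow> (\<Sum>i\<le>degree p. coeff p i * 0)) at_top"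
    by (intro tendsto_sum tendsto_mult tendsto_const tendsto_power_div_exp_0)
  moreover have "(\<Sum>i\<le>degree p. coeff p i * (y ^ i / exp y)) = poly p y * exp (- y)" for y
    by (simp add: poly_altdef exp_minus divide_inverse sum_distrib_right mult.assoc)
  ultimately show ?thesis by simp
qed

lemma poly_flat_exp_has_deriv_0: "(poly_flat_exp p has_real_derivative 0) (at 0)"
proof -
  have "((\<lambda>x. poly (pCons 0 p) (inverse x) * exp (- inverse x)) \<longlongrightarrow> 0) (at_right (0::real))"
    using filterlim_compose[OF poly_times_exp_neg_tendsto_0[of "pCons 0 p"] filterlim_inverse_at_top_right]
    by (simp add: o_def)
  then have right: "((\<lambda>x. (poly_flat_exp p x - poly_flat_exp p 0) / (x - 0)) \<longlongrightarrow> 0) (at_right 0)"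
    by (rule Lim_transform_eventually[OF _ eventually_mono[OF eventually_at_right_less[of 0]]])
      (simp add: poly_flat_exp_def divide_inverse)
  have left: "((\<lambda>x. (poly_flat_exp p x - poly_flat_exp p 0) / (x - 0)) \<longlongrightarrow> 0) (at_left 0)"
    by (rule Lim_transform_eventually[OF tendsto_const
          eventually_mono[OF eventually_at_left_real[of "-1" 0]]])
      (auto simp: poly_flat_exp_def)
  show ?thesis
    unfolding has_field_derivative_iff using filterlim_at_split left right by blast
qed

lemma poly_flat_exp_has_deriv:
  "(poly_flat_exp p has_real_derivative poly_flat_exp ([:0, 0, 1:] * (p - pderiv p)) x) (at x)"
proof (cases rule: linorder_cases[of x 0])
  case less
  have "((\<lambda>x. 0) has_real_derivative poly_flat_exp ([:0, 0, 1:] * (p - pderiv p)) x) (at x)"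
    using less by (simp add: poly_flat_exp_def)
  then show ?thesis
    by (rule has_field_derivative_transform_within_open[where S="{..<0}"])
      (use less in \<open>auto simp: poly_flat_exp_def\<close>)
next
  case equal
  then show ?thesis using poly_flat_exp_has_deriv_0 by (simp add: poly_flat_exp_def)
next
  case greater
  have "((\<lambda>x. poly p (inverse x) * exp (- inverse x)) has_real_derivative
      poly (pderiv p) (inverse x) * (- inverse (x * x)) * exp (- inverse x) +
      poly p (inverse x) * (exp (- inverse x) * inverse (x * x))) (at x)"
    using greater
    by (auto intro!: derivative_eq_intros DERIV_chain2[where f="poly p"] poly_DERIV
        simp: power2_eq_square)
  moreover have "poly (pderiv p) (inverse x) * (- inverse (x * x)) * exp (- inverse x) +
      poly p (inverse x) * (exp (- inverse x) * inverse (x * x))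
      = poly_flat_exp ([:0, 0, 1:] * (p - pderiv p)) x"
    using greater by (simp add: poly_flat_exp_def algebra_simps power2_eq_square)
  ultimately have "((\<lambda>x. poly p (inverse x) * exp (- inverse x)) has_real_derivative
      poly_flat_exp ([:0, 0, 1:] * (p - pderiv p)) x) (at x)"
    by simp
  then show ?thesis
    by (rule has_field_derivative_transform_within_open[where S="{0<..}"])
      (use greater in \<open>auto simp: poly_flat_exp_def\<close>)
qed

lemma smooth_real_poly_flat_exp: "smooth_real (poly_flat_exp p)"
proof -
  have "times_differentiable k (poly_flat_exp p)" for k
  proof (induction k arbitrary: p)
    case (Suc k)
    have "deriv (poly_flat_exp p) = poly_flat_exp ([:0, 0, 1:] * (p - pderiv p))"
      by (intro ext DERIV_imp_deriv poly_flat_exp_has_deriv)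
    moreover have "poly_flat_exp p field_differentiable at x" for x
      by (meson field_differentiable_def poly_flat_exp_has_deriv)
    ultimately show ?case using Suc by simp
  qed simp
  then show ?thesis by (simp add: smooth_real_def)
qed

lemma smooth_real_flat_exp: "smooth_real flat_exp"
proof -
  have "poly_flat_exp 1 = flat_exp" by (simp add: fun_eq_iff flat_exp_def poly_flat_exp_def)
  then show ?thesis by (metis smooth_real_poly_flat_exp)
qed

lemma flat_exp_nonneg: "flat_exp x \<ge> 0"
  by (simp add: flat_exp_def)

definition smooth_step :: "real \<Rightarrow> real" where
  "smooth_step s = flat_exp (s - 1) / (flat_exp (s - 1) + flat_exp (2 - s))"

lemma smooth_step_denominator_pos: "flat_exp (s - 1) + flat_exp (2 - s) > 0"
  using flat_exp_nonneg[of "s - 1"] flat_exp_nonneg[of "2 - s"]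
  by (cases "s > 1") (auto simp: flat_exp_def add_pos_nonneg add_nonneg_pos)

lemma smooth_real_smooth_step: "smooth_real smooth_step"
proof -
  have "smooth_real (\<lambda>s. flat_exp (1 * s + -1))" "smooth_real (\<lambda>s. flat_exp ((-1) * s + 2))"
    by (intro smooth_real_affine smooth_real_flat_exp)+
  then have "smooth_real (\<lambda>s. flat_exp (s - 1))" "smooth_real (\<lambda>s. flat_exp (2 - s))"
    by simp_all
  moreover have "\<forall>s. flat_exp (s - 1) + flat_exp (2 - s) \<noteq> 0"
    using smooth_step_denominator_pos by (metis less_irrefl)
  ultimately show ?thesis
    unfolding smooth_step_def[abs_def] divide_inverse
    by (intro smooth_real_mult smooth_real_inverse smooth_real_add)
qed

lemma smooth_step_eq_0: "s \<le> 1 \<Longrightarrow> smooth_step s = 0"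
  by (simp add: smooth_step_def flat_exp_def)

lemma smooth_step_eq_1: "s \<ge> 2 \<Longrightarrow> smooth_step s = 1"
  using smooth_step_denominator_pos[of s] by (simp add: smooth_step_def flat_exp_def)

lemma smooth_step_nonneg: "smooth_step s \<ge> 0"
  using smooth_step_denominator_pos[of s] by (simp add: smooth_step_def flat_exp_nonneg)

lemma smooth_step_le_1: "smooth_step s \<le> 1"
  using smooth_step_denominator_pos[of s] flat_exp_nonneg[of "2 - s"]
  by (simp add: smooth_step_def field_simps)

lemma smooth_step_derivs_eq_0:
  assumes "s < 1 \<or> s > 2"
  shows "deriv smooth_step s = 0" "deriv (deriv smooth_step) s = 0"
proof -
  have "\<exists>A c. open A \<and> s \<in> A \<and> (\<forall>y\<in>A. smooth_step y = c)"
  proof (cases "s < 1")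
    case True then show ?thesis
      by (intro exI[of _ "{..<1}"] exI[of _ 0]) (auto simp: smooth_step_eq_0)
  next
    case False then show ?thesis using assms
      by (intro exI[of _ "{2<..}"] exI[of _ 1]) (auto simp: smooth_step_eq_1)
  qed
  then show "deriv smooth_step s = 0" "deriv (deriv smooth_step) s = 0"
    using deriv_locally_constant by metis+
qed

lemma smooth_step_derivs_weighted_bound:
  obtains M where "M \<ge> 0"
    "\<And>s. s \<ge> 0 \<Longrightarrow> \<bar>deriv smooth_step s\<bar> * s \<le> M"
    "\<And>s. s \<ge> 0 \<Longrightarrow> \<bar>deriv (deriv smooth_step) s\<bar> * s\<^sup>2 \<le> M"
proof -
  obtain B1 where B1: "\<And>s. s \<in> {0..2} \<Longrightarrow> \<bar>deriv smooth_step s\<bar> \<le> B1"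
    using continuous_on_compact_bound[OF compact_Icc
        smooth_real_continuous_on[OF smooth_real_deriv[OF smooth_real_smooth_step]]]
    by (metis real_norm_def)
  obtain B2 where B2: "\<And>s. s \<in> {0..2} \<Longrightarrow> \<bar>deriv (deriv smooth_step) s\<bar> \<le> B2"
    using continuous_on_compact_bound[OF compact_Icc smooth_real_continuous_on[OF
          smooth_real_deriv[OF smooth_real_deriv[OF smooth_real_smooth_step]]]]
    by (metis real_norm_def)
  have "0 \<le> B1" "0 \<le> B2" using B1[of 0] B2[of 0] by auto
  show thesis
  proof (rule that[of "2 * B1 + 4 * B2"])
    show "0 \<le> 2 * B1 + 4 * B2" using \<open>0 \<le> B1\<close> \<open>0 \<le> B2\<close> by simp
    fix s :: real assume "s \<ge> 0"
    show "\<bar>deriv smooth_step s\<bar> * s \<le> 2 * B1 + 4 * B2"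
    proof (cases "s \<le> 2")
      case True
      then have "\<bar>deriv smooth_step s\<bar> * s \<le> B1 * 2"
        using B1 \<open>s \<ge> 0\<close> \<open>0 \<le> B1\<close> by (intro mult_mono) auto
      then show ?thesis using \<open>0 \<le> B2\<close> by simp
    qed (use smooth_step_derivs_eq_0 \<open>0 \<le> B1\<close> \<open>0 \<le> B2\<close> in auto)
    show "\<bar>deriv (deriv smooth_step) s\<bar> * s\<^sup>2 \<le> 2 * B1 + 4 * B2"
    proof (cases "s \<le> 2")
      case True
      then have "s\<^sup>2 \<le> 2\<^sup>2" using \<open>s \<ge> 0\<close> by (intro power_mono) auto
      then have "\<bar>deriv (deriv smooth_step) s\<bar> * s\<^sup>2 \<le> B2 * 4"
        using B2 True \<open>s \<ge> 0\<close> \<open>0 \<le> B2\<close> by (intro mult_mono) auto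
      then show ?thesis using \<open>0 \<le> B1\<close> by simp
    qed (use smooth_step_derivs_eq_0 \<open>0 \<le> B1\<close> \<open>0 \<le> B2\<close> in auto)
  qed
qed

lemma deriv_smooth_step_scaled:
  "deriv (\<lambda>x. smooth_step (n * x)) x = n * deriv smooth_step (n * x)"
  "deriv (deriv (\<lambda>x. smooth_step (n * x))) x = n * (n * deriv (deriv smooth_step) (n * x))"
proof -
  note step = smooth_real_smooth_step smooth_real_deriv[OF smooth_real_smooth_step]
  have "smooth_real (\<lambda>x. deriv smooth_step (n * x))"
    using smooth_real_affine[OF step(2), of n 0] by simp
  moreover have "deriv (\<lambda>x. smooth_step (n * x)) = (\<lambda>x. n * deriv smooth_step (n * x))"
    using step by (simp add: fun_eq_iff deriv_compose_linear smooth_real_field_differentiable)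
  ultimately show "deriv (\<lambda>x. smooth_step (n * x)) x = n * deriv smooth_step (n * x)"
    "deriv (deriv (\<lambda>x. smooth_step (n * x))) x = n * (n * deriv (deriv smooth_step) (n * x))"
    using step by (simp_all add: deriv_compose_linear smooth_real_field_differentiable)
qed

lemma smooth_step_scaled_weighted_bound:
  obtains M where "M \<ge> 0"
    "\<And>n t. n > 0 \<Longrightarrow> t \<ge> 0 \<Longrightarrow> \<bar>deriv (\<lambda>x. smooth_step (n * x)) t\<bar> * t \<le> M"
    "\<And>n t. n > 0 \<Longrightarrow> t \<ge> 0 \<Longrightarrow> \<bar>deriv (deriv (\<lambda>x. smooth_step (n * x))) t\<bar> * t\<^sup>2 \<le> M"
proof -
  obtain M where M: "M \<ge> 0"
    "\<And>s. s \<ge> 0 \<Longrightarrow> \<bar>deriv smooth_step s\<bar> * s \<le> M"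
    "\<And>s. s \<ge> 0 \<Longrightarrow> \<bar>deriv (deriv smooth_step) s\<bar> * s\<^sup>2 \<le> M"
    by (rule smooth_step_derivs_weighted_bound) blast
  show thesis
  proof (rule that[OF M(1)])
    fix n t :: real assume "n > 0" "t \<ge> 0"
    then have "n * t \<ge> 0" by simp
    from M(2)[OF this] M(3)[OF this] \<open>n > 0\<close>
    show "\<bar>deriv (\<lambda>x. smooth_step (n * x)) t\<bar> * t \<le> M"
      "\<bar>deriv (deriv (\<lambda>x. smooth_step (n * x))) t\<bar> * t\<^sup>2 \<le> M"
      unfolding deriv_smooth_step_scaled
      by (simp_all add: abs_mult power_mult_distrib power2_eq_square mult_ac)
  qed
qed

definition plateau :: "real \<Rightarrow> real \<Rightarrow> real" where
  "plateau n t = smooth_step (n * t) * smooth_step (n * (1 - t))"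

lemma smooth_real_plateau: "smooth_real (plateau n)"
proof -
  have "smooth_real (\<lambda>t. smooth_step (n * t + 0))" "smooth_real (\<lambda>t. smooth_step ((-n) * t + n))"
    by (intro smooth_real_affine smooth_real_smooth_step)+
  then show ?thesis
    unfolding plateau_def[abs_def] by (intro smooth_real_mult) (simp_all add: algebra_simps)
qed

lemma plateau_nonneg: "plateau n t \<ge> 0"
  by (simp add: plateau_def smooth_step_nonneg)

lemma plateau_le_1: "plateau n t \<le> 1"
  unfolding plateau_def by (intro mult_le_one smooth_step_le_1 smooth_step_nonneg)

lemma plateau_eq_0: "n > 0 \<Longrightarrow> t \<le> 1 / n \<or> t \<ge> 1 - 1 / n \<Longrightarrow> plateau n t = 0"
  by (auto simp: plateau_def smooth_step_eq_0 field_simps)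

lemma plateau_eq_1_nearby:
  assumes "n * t > 2" "n * (1 - t) > 2"
  shows "plateau n t = 1" "deriv (plateau n) t = 0" "deriv (deriv (plateau n)) t = 0"
proof -
  have "n > 0" using assms by (smt (verit) mult_le_0_iff)
  have one: "plateau n s = 1" if "s \<in> {2 / n <..< 1 - 2 / n}" for s
    using that \<open>n > 0\<close> by (auto simp: plateau_def smooth_step_eq_1 field_simps)
  have "t \<in> {2 / n <..< 1 - 2 / n}" using assms \<open>n > 0\<close> by (auto simp: field_simps)
  then show "plateau n t = 1" "deriv (plateau n) t = 0" "deriv (deriv (plateau n)) t = 0"
    using one deriv_locally_constant[OF open_greaterThanLessThan _ one] by auto
qed

lemma eventually_plateau_eq_1:
  assumes "0 < t" "t < 1"
  shows "eventually (\<lambda>m. plateau (Suc m) t = 1 \<and> deriv (plateau (Suc m)) t = 0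
      \<and> deriv (deriv (plateau (Suc m))) t = 0) sequentially"
proof -
  have "eventually (\<lambda>m. real m > 2 / t + 2 / (1 - t)) sequentially"
    using filterlim_real_sequentially by (simp add: filterlim_at_top_dense)
  then have "eventually (\<lambda>m. real (Suc m) > 2 / t + 2 / (1 - t)) sequentially"
    by (rule eventually_mono) simp
  then show ?thesis
  proof (rule eventually_mono)
    fix m :: nat assume m: "real (Suc m) > 2 / t + 2 / (1 - t)"
    have "2 / t > 0" "2 / (1 - t) > 0" using assms by auto
    then have "real (Suc m) > 2 / t" "real (Suc m) > 2 / (1 - t)" using m by linarith+
    then have "real (Suc m) * t > 2" "real (Suc m) * (1 - t) > 2"
      using assms by (auto simp: field_simps)
    then show "plateau (Suc m) t = 1 \<and> deriv (plateau (Suc m)) t = 0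
      \<and> deriv (deriv (plateau (Suc m))) t = 0"
      using plateau_eq_1_nearby by blast
  qed
qed

lemma abs_mult_weight_mono:
  fixes a b d s :: real
  assumes "\<bar>a\<bar> \<le> 1" "0 \<le> d" "d \<le> s"
  shows "\<bar>a * b\<bar> * d \<le> \<bar>b\<bar> * s"
proof -
  have "\<bar>a\<bar> * (\<bar>b\<bar> * d) \<le> \<bar>b\<bar> * d"
    using assms by (intro mult_left_le_one_le) auto
  also have "\<dots> \<le> \<bar>b\<bar> * s" using assms by (intro mult_left_mono) auto
  finally show ?thesis by (simp add: abs_mult mult.assoc)
qed

lemma product_derivs_weighted_bound:
  fixes f0 f1 f2 g0 g1 g2 a b d M :: real
  assumes "\<bar>f0\<bar> \<le> 1" "\<bar>g0\<bar> \<le> 1" and "0 \<le> d" "d \<le> a" "d \<le> b" "0 \<le> M"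
    and "\<bar>f1\<bar> * a \<le> M" "\<bar>f2\<bar> * a\<^sup>2 \<le> M" "\<bar>g1\<bar> * b \<le> M" "\<bar>g2\<bar> * b\<^sup>2 \<le> M"
  shows "\<bar>f0 * g1 + f1 * g0\<bar> * d \<le> 2 * M + 2 * M\<^sup>2"
    and "\<bar>f2 * g0 + 2 * (f1 * g1) + f0 * g2\<bar> * d\<^sup>2 \<le> 2 * M + 2 * M\<^sup>2"
proof -
  have d2: "d\<^sup>2 \<le> a\<^sup>2" "d\<^sup>2 \<le> b\<^sup>2" using assms(3-5) by (auto intro: power_mono)
  have "\<bar>f0 * g1 + f1 * g0\<bar> * d \<le> (\<bar>f0 * g1\<bar> + \<bar>g0 * f1\<bar>) * d"
    using abs_triangle_ineq[of "f0 * g1" "g0 * f1"] assms(3)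
    by (intro mult_right_mono) (simp_all add: mult.commute)
  also have "\<dots> = \<bar>f0 * g1\<bar> * d + \<bar>g0 * f1\<bar> * d" by (rule distrib_right)
  also have "\<dots> \<le> \<bar>g1\<bar> * b + \<bar>f1\<bar> * a"
    using assms by (intro add_mono abs_mult_weight_mono) auto
  finally show "\<bar>f0 * g1 + f1 * g0\<bar> * d \<le> 2 * M + 2 * M\<^sup>2"
    using assms(7,9) zero_le_power2[of M] by linarith
  have "\<bar>f1 * g1\<bar> * d\<^sup>2 = (\<bar>f1\<bar> * d) * (\<bar>g1\<bar> * d)"
    by (simp add: abs_mult power2_eq_square)
  also have "\<dots> \<le> (\<bar>f1\<bar> * a) * (\<bar>g1\<bar> * b)"
    using assms(3-5) by (intro mult_mono mult_left_mono) auto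
  also have "\<dots> \<le> M * M" using assms(3-7,9) by (intro mult_mono) auto
  finally have cross: "\<bar>f1 * g1\<bar> * d\<^sup>2 \<le> M\<^sup>2" by (simp add: power2_eq_square)
  have "\<bar>f2 * g0 + 2 * (f1 * g1) + f0 * g2\<bar> \<le> \<bar>g0 * f2\<bar> + 2 * \<bar>f1 * g1\<bar> + \<bar>f0 * g2\<bar>"
    by (simp add: mult.commute)
  from mult_right_mono[OF this zero_le_power2[of d]]
  have "\<bar>f2 * g0 + 2 * (f1 * g1) + f0 * g2\<bar> * d\<^sup>2
      \<le> \<bar>g0 * f2\<bar> * d\<^sup>2 + 2 * (\<bar>f1 * g1\<bar> * d\<^sup>2) + \<bar>f0 * g2\<bar> * d\<^sup>2"
    by (simp add: algebra_simps)
  also have "\<dots> \<le> \<bar>f2\<bar> * a\<^sup>2 + 2 * M\<^sup>2 + \<bar>g2\<bar> * b\<^sup>2"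
    using assms d2 cross by (intro add_mono abs_mult_weight_mono) auto
  finally show "\<bar>f2 * g0 + 2 * (f1 * g1) + f0 * g2\<bar> * d\<^sup>2 \<le> 2 * M + 2 * M\<^sup>2"
    using assms(8,10) by linarith
qed

text \<open>The derivatives of \<open>plateau n\<close> grow like \<open>n\<close> and \<open>n\<^sup>2\<close>, but they live within distance
  \<open>2 / n\<close> of the boundary; weighted by powers of that distance they are bounded uniformly in \<open>n\<close>.\<close>

lemma plateau_derivs_weighted_bound:
  obtains C where
    "\<And>n t. n > 0 \<Longrightarrow> t \<in> {0..1} \<Longrightarrow> \<bar>deriv (plateau n) t\<bar> * min t (1 - t) \<le> C"
    "\<And>n t. n > 0 \<Longrightarrow> t \<in> {0..1} \<Longrightarrow> \<bar>deriv (deriv (plateau n)) t\<bar> * (min t (1 - t))\<^sup>2 \<le> C"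
proof -
  obtain M where M: "M \<ge> 0"
    "\<And>n t. n > 0 \<Longrightarrow> t \<ge> 0 \<Longrightarrow> \<bar>deriv (\<lambda>x. smooth_step (n * x)) t\<bar> * t \<le> M"
    "\<And>n t. n > 0 \<Longrightarrow> t \<ge> 0 \<Longrightarrow> \<bar>deriv (deriv (\<lambda>x. smooth_step (n * x))) t\<bar> * t\<^sup>2 \<le> M"
    by (rule smooth_step_scaled_weighted_bound) blast
  show thesis
  proof (rule that)
    fix n t :: real assume n: "n > 0" and t: "t \<in> {0..1}"
    define h where "h = (\<lambda>x. smooth_step (n * x))"
    have h: "smooth_real h" "smooth_real (\<lambda>x. h (1 - x))"
      using smooth_real_affine[OF smooth_real_smooth_step, of n 0]
        smooth_real_affine[OF smooth_real_smooth_step, of "- n" n]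
      by (simp_all add: h_def algebra_simps)
    have P: "plateau n = (\<lambda>x. h x * h (1 - x))" by (simp add: fun_eq_iff plateau_def h_def)
    have "deriv (plateau n) t = h t * - deriv h (1 - t) + deriv h t * h (1 - t)"
      unfolding P using h by (simp add: smooth_real_field_differentiable deriv_reflect_smooth_real)
    moreover have "deriv (deriv (plateau n)) t
        = deriv (deriv h) t * h (1 - t) + 2 * (deriv h t * - deriv h (1 - t))
          + h t * deriv (deriv h) (1 - t)"
      unfolding P deriv2_mult_smooth_real[OF h] deriv_reflect_smooth_real[OF h(1)] by simp
    moreover have "\<bar>h x\<bar> \<le> 1" for x
      using smooth_step_le_1 smooth_step_nonneg by (simp add: h_def abs_le_iff order_trans[OF _ smooth_step_nonneg])
    moreover have "0 \<le> t" "0 \<le> 1 - t" using t by auto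
    ultimately show "\<bar>deriv (plateau n) t\<bar> * min t (1 - t) \<le> 2 * M + 2 * M\<^sup>2"
      "\<bar>deriv (deriv (plateau n)) t\<bar> * (min t (1 - t))\<^sup>2 \<le> 2 * M + 2 * M\<^sup>2"
      using product_derivs_weighted_bound[of "h t" "h (1 - t)" "min t (1 - t)" t "1 - t" M
          "deriv h t" "deriv (deriv h) t" "- deriv h (1 - t)" "deriv (deriv h) (1 - t)"]
        M n unfolding h_def by auto
  qed
qed

lemma abs_mult_le_weighted:
  fixes a b w V C :: real
  assumes "\<bar>a\<bar> \<le> V * w" "\<bar>b\<bar> * w \<le> C" "0 \<le> V"
  shows "\<bar>a * b\<bar> \<le> V * C"
proof -
  have "\<bar>a * b\<bar> \<le> V * w * \<bar>b\<bar>" using assms(1) by (simp add: abs_mult mult_right_mono)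
  also have "\<dots> \<le> V * C" using mult_left_mono[OF assms(2,3)] by (simp add: mult_ac)
  finally show ?thesis .
qed

lemma cutoff_deriv2_bounded:
  assumes v: "smooth_real v" and bc: "v 0 = 0" "deriv v 0 = 0" "v 1 = 0" "deriv v 1 = 0"
  obtains K where
    "\<And>n t. n > 0 \<Longrightarrow> t \<in> {0..1} \<Longrightarrow> \<bar>deriv (deriv (\<lambda>s. v s * plateau n s)) t\<bar> \<le> K"
proof -
  obtain V where V: "\<And>s. s \<in> {0..1} \<Longrightarrow> \<bar>deriv (deriv v) s\<bar> \<le> V"
    using continuous_on_compact_bound[OF compact_Icc smooth_real_continuous_on[OF
          smooth_real_deriv[OF smooth_real_deriv[OF v]]]]
    by (metis real_norm_def)
  have "0 \<le> V" using V[of 0] by auto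
  obtain C where C: "\<And>n t. n > 0 \<Longrightarrow> t \<in> {0..1} \<Longrightarrow> \<bar>deriv (plateau n) t\<bar> * min t (1 - t) \<le> C"
    "\<And>n t. n > 0 \<Longrightarrow> t \<in> {0..1} \<Longrightarrow> \<bar>deriv (deriv (plateau n)) t\<bar> * (min t (1 - t))\<^sup>2 \<le> C"
    by (metis plateau_derivs_weighted_bound)
  show thesis
  proof (rule that[of "V + 3 * (V * C)"])
    fix n t :: real assume n: "n > 0" and t: "t \<in> {0..1}"
    define d where "d = min t (1 - t)"
    have vb: "\<bar>deriv v t\<bar> \<le> V * d" "\<bar>v t\<bar> \<le> V * d\<^sup>2"
      using bound_between_double_zeros[OF v bc] V t unfolding d_def by blast+
    have "\<bar>deriv (deriv v) t * plateau n t\<bar> \<le> V * 1"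
      using V[OF t] plateau_nonneg[of n t] plateau_le_1[of n t]
      unfolding abs_mult by (intro mult_mono) auto
    moreover have "\<bar>deriv v t * deriv (plateau n) t\<bar> \<le> V * C"
      using vb(1) C(1)[OF n t] \<open>0 \<le> V\<close> unfolding d_def by (rule abs_mult_le_weighted)
    moreover have "\<bar>v t * deriv (deriv (plateau n)) t\<bar> \<le> V * C"
      using vb(2) C(2)[OF n t] \<open>0 \<le> V\<close> unfolding d_def by (rule abs_mult_le_weighted)
    moreover have "deriv (deriv (\<lambda>s. v s * plateau n s)) t = deriv (deriv v) t * plateau n t
        + 2 * (deriv v t * deriv (plateau n) t) + v t * deriv (deriv (plateau n)) t"
      using deriv2_mult_smooth_real[OF v smooth_real_plateau] by simp
    ultimately show "\<bar>deriv (deriv (\<lambda>s. v s * plateau n s)) t\<bar> \<le> V + 3 * (V * C)"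
      by (simp add: abs_le_iff)
  qed
qed

lemma cutoff_bounded:
  assumes "smooth_real v"
  obtains B where "\<And>n t. t \<in> {0..1} \<Longrightarrow> \<bar>v t * plateau n t\<bar> \<le> B"
proof -
  obtain B where B: "B \<ge> 0" "\<And>t. t \<in> {0..1} \<Longrightarrow> norm (v t) \<le> B"
    by (rule continuous_on_compact_bound[OF compact_Icc smooth_real_continuous_on[OF assms]]) blast
  have "\<bar>v t * plateau n t\<bar> \<le> B" if "t \<in> {0..1}" for n t
  proof -
    have "\<bar>v t * plateau n t\<bar> \<le> \<bar>v t\<bar>"
      using plateau_nonneg[of n t] plateau_le_1[of n t] by (simp add: abs_mult mult_right_le_one_le)
    then show ?thesis using B(2)[OF that] by simp
  qed
  then show thesis by (rule that)
qed

lemma cutoff_eventually_eq: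
  assumes "smooth_real v" "0 < t" "t < 1"
  shows "eventually (\<lambda>m. v t * plateau (Suc m) t = v t
    \<and> deriv (deriv (\<lambda>s. v s * plateau (Suc m) s)) t = deriv (deriv v) t) sequentially"
  using eventually_plateau_eq_1[OF assms(2,3)]
  by eventually_elim (simp add: deriv2_mult_smooth_real[OF assms(1) smooth_real_plateau])

section \<open>Tensor products\<close>

definition tensor :: "('n::finite \<Rightarrow> real \<Rightarrow> real) \<Rightarrow> real^'n \<Rightarrow> real" where
  "tensor u x = (\<Prod>i\<in>UNIV. u i (x$i))"

lemma tensor_along_axis:
  "tensor w (x + t *\<^sub>R axis j 1) = w j (x$j + t) * (\<Prod>i\<in>UNIV - {j}. w i (x$i))"
proof -
  have "tensor w (x + t *\<^sub>R axis j 1) = (\<Prod>i\<in>UNIV. w i (x $ i + (if i = j then t else 0)))"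
    unfolding tensor_def by (intro prod.cong) (auto simp: axis_def)
  also have "\<dots> = w j (x$j + t) * (\<Prod>i\<in>UNIV - {j}. w i (x$i))"
    by (subst prod.remove[of UNIV j]) (auto intro!: prod.cong)
  finally show ?thesis .
qed

lemma tensor_has_deriv_along_axis:
  assumes "smooth_real (w j)"
  shows "((\<lambda>t. tensor w (x + t *\<^sub>R axis j 1)) has_real_derivative
          tensor (\<lambda>i. if i = j then deriv (w i) else w i) x) (at 0)"
proof -
  have "((\<lambda>t. w j (x$j + t)) has_real_derivative deriv (w j) (x$j + 0) * 1) (at 0)"
    by (rule DERIV_chain2[OF smooth_real_has_deriv[OF assms]]) (auto intro!: derivative_eq_intros)
  then have "((\<lambda>t. w j (x$j + t) * (\<Prod>i\<in>UNIV - {j}. w i (x$i))) has_real_derivative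
      deriv (w j) (x$j) * (\<Prod>i\<in>UNIV - {j}. w i (x$i))) (at 0)"
    by (auto intro: DERIV_cmult_right)
  moreover have "tensor (\<lambda>i. if i = j then deriv (w i) else w i) x
      = deriv (w j) (x$j) * (\<Prod>i\<in>UNIV - {j}. w i (x$i))"
    unfolding tensor_def by (subst prod.remove[of UNIV j]) (auto intro!: prod.cong)
  ultimately show ?thesis unfolding tensor_along_axis by simp
qed

lemma partial_tensor:
  assumes "smooth_real (w j)"
  shows "partial j (tensor w) = tensor (\<lambda>i. if i = j then deriv (w i) else w i)"
  unfolding partial_def using DERIV_imp_deriv[OF tensor_has_deriv_along_axis[of w j, OF assms]] by (rule ext)

lemma iter_partial_tensor:
  assumes "\<And>i. smooth_real (u i)"
  shows "iter_partial is (tensor u) = tensor (\<lambda>i. (deriv ^^ count_list is i) (u i))"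
proof (induction "is")
  case (Cons j "is")
  have "iter_partial (j # is) (tensor u) = partial j (tensor (\<lambda>i. (deriv ^^ count_list is i) (u i)))"
    using Cons by simp
  also have "\<dots> = tensor (\<lambda>i. if i = j then deriv ((deriv ^^ count_list is i) (u i))
      else (deriv ^^ count_list is i) (u i))"
    by (simp add: partial_tensor assms smooth_real_funpow_deriv)
  also have "\<dots> = tensor (\<lambda>i. (deriv ^^ count_list (j # is) i) (u i))"
    by (rule arg_cong[where f=tensor]) (auto simp: fun_eq_iff)
  finally show ?case .
qed simp

lemma continuous_on_tensor:
  assumes "\<And>i. smooth_real (w i)" shows "continuous_on A (tensor w)"
  unfolding tensor_def[abs_def]
  by (intro continuous_on_prod continuous_on_compose2[OF smooth_real_continuous_on[OF assms]]
      continuous_on_component continuous_on_id) auto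

lemma smooth_fun_tensor:
  assumes "\<And>i. smooth_real (u i)" shows "smooth_fun (tensor u)"
  unfolding smooth_fun_def iter_partial_tensor[OF assms]
proof (intro allI conjI)
  fix "is" j x
  have sm: "\<And>i. smooth_real ((deriv ^^ count_list is i) (u i))"
    using assms smooth_real_funpow_deriv by blast
  then show "continuous_on UNIV (tensor (\<lambda>i. (deriv ^^ count_list is i) (u i)))"
    by (rule continuous_on_tensor)
  show "(\<lambda>t. tensor (\<lambda>i. (deriv ^^ count_list is i) (u i)) (x + t *\<^sub>R axis j 1)) differentiable at 0"
    using tensor_has_deriv_along_axis[of "\<lambda>i. (deriv ^^ count_list is i) (u i)" j x, OF sm] real_differentiable_def by blast
qed

lemma test_fun_tensor:
  assumes "\<And>i. smooth_real (u i)" and d: "0 < d" "d < 1/2"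
    and supp: "\<And>i t. t \<le> d \<or> t \<ge> 1 - d \<Longrightarrow> u i t = 0"
  shows "test_fun (tensor u)"
  unfolding test_fun_def
proof (intro conjI smooth_fun_tensor[OF assms(1)] exI[of _ "cbox (\<chi> i. d) (\<chi> i. 1 - d)"])
  show "compact (cbox (\<chi> i. d) (\<chi> i. 1 - d) :: (real^'a) set)" by simp
  show "cbox (\<chi> i. d) (\<chi> i. 1 - d) \<subseteq> (open_unit_cube :: (real^'a) set)"
  proof
    fix x :: "real^'a" assume x: "x \<in> cbox (\<chi> i. d) (\<chi> i. 1 - d)"
    have "0 < x$i \<and> x$i < 1" for i
    proof -
      from x have "d \<le> x$i \<and> x$i \<le> 1 - d" by (simp add: mem_box_cart)
      with d show ?thesis by linarith
    qed
    then show "x \<in> open_unit_cube" by (simp add: open_unit_cube_def mem_box_cart)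
  qed
  show "\<forall>x. x \<notin> cbox (\<chi> i. d) (\<chi> i. 1 - d) \<longrightarrow> tensor u x = 0"
  proof (intro allI impI)
    fix x :: "real^'a" assume "x \<notin> cbox (\<chi> i. d) (\<chi> i. 1 - d)"
    then obtain i where "x$i < d \<or> x$i > 1 - d" by (auto simp: mem_box_cart not_le)
    then have "u i (x$i) = 0" using supp by force
    then show "tensor u x = 0" unfolding tensor_def by (intro prod_zero) auto
  qed
qed

lemma mixed_D2_tensor:
  assumes "\<And>i. smooth_real (u i)"
  shows "mixed_D2 e (tensor u) = tensor (\<lambda>i. if i \<in> e then deriv (deriv (u i)) else u i)"
proof -
  define l where "l = (SOME l. set l = e \<and> distinct l)"
  have "\<exists>l. set l = e \<and> distinct l" by (rule finite_distinct_list) simp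
  then have l: "set l = e" "distinct l" unfolding l_def by (metis (mono_tags, lifting) someI_ex)+
  have "count_list (concat (map (\<lambda>i. [i, i]) l)) i = 2 * count_list l i" for i
    by (induction l) auto
  moreover have "count_list l i = (if i \<in> set l then 1 else 0)" for i
    using l(2) by (induction l) auto
  ultimately have "(deriv ^^ count_list (concat (map (\<lambda>i. [i, i]) l)) i) (u i)
      = (if i \<in> e then deriv (deriv (u i)) else u i)" for i
    by (simp add: l(1) numeral_2_eq_2)
  then show ?thesis
    unfolding mixed_D2_def l_def[symmetric] iter_partial_tensor[OF assms] by presburger
qed

lemma tensor_add_expansion:
  "tensor (\<lambda>i t. a i t + b i t) x = (\<Sum>e\<in>UNIV. tensor (\<lambda>i. if i \<in> e then a i else b i) x)"
proof -
  have "tensor (\<lambda>i t. a i t + b i t) x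
      = (\<Sum>e\<in>Pow UNIV. (\<Prod>i\<in>e. a i (x$i)) * (\<Prod>i\<in>UNIV - e. b i (x$i)))"
    unfolding tensor_def by (rule prod_add) simp
  also have "\<dots> = (\<Sum>e\<in>UNIV. tensor (\<lambda>i. if i \<in> e then a i else b i) x)"
    by (simp add: tensor_def if_distrib[of "\<lambda>h. h (x$_)"] prod.If_cases Compl_eq_Diff_UNIV)
  finally show ?thesis .
qed

lemma sets_lebesgue_unit_cube: "(unit_cube :: (real^'n::finite) set) \<in> sets lebesgue"
  by (simp add: unit_cube_def)

lemma finite_measure_unit_cube: "finite_measure (lebesgue_on (unit_cube :: (real^'n::finite) set))"
  by (simp add: unit_cube_def finite_measure_lebesgue_on)

lemma measure_unit_cube:
  "measure (lebesgue_on unit_cube) (space (lebesgue_on (unit_cube :: (real^'n::finite) set))) = 1"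
  by (simp add: unit_cube_def measure_restrict_space content_cbox_if_cart interval_ne_empty_cart)

lemma AE_open_unit_cube: "AE x in lebesgue_on (unit_cube :: (real^'n::finite) set). x \<in> box 0 1"
proof -
  have "(cbox 0 1 - box 0 1 :: (real^'n) set) \<in> null_sets lebesgue"
    using negligible_frontier_interval negligible_iff_null_sets by blast
  then have "AE x in lebesgue. x \<notin> (cbox 0 1 - box 0 1 :: (real^'n) set)" by (rule AE_not_in)
  then show ?thesis
    by (subst AE_restrict_space_iff) (auto simp: unit_cube_def elim!: eventually_mono)
qed

lemma L2_cube_integrable: "L2_cube f \<Longrightarrow> integrable (lebesgue_on unit_cube) f"
  unfolding L2_cube_def
  by (auto intro: finite_measure.square_integrable_imp_integrable[OF finite_measure_unit_cube])

lemma integrable_mult_bounded: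
  fixes f h :: "'a \<Rightarrow> real"
  assumes "integrable M f" "h \<in> borel_measurable M" "\<And>x. x \<in> space M \<Longrightarrow> \<bar>h x\<bar> \<le> K"
  shows "integrable M (\<lambda>x. f x * h x)"
proof (rule Bochner_Integration.integrable_bound)
  show "integrable M (\<lambda>x. K * f x)" using assms(1) by simp
  have "\<bar>f x\<bar> * \<bar>h x\<bar> \<le> \<bar>f x\<bar> * \<bar>K\<bar>" if "x \<in> space M" for x
    using assms(3)[OF that] by (intro mult_left_mono) auto
  then show "AE x in M. norm (f x * h x) \<le> norm (K * f x)"
    by (intro AE_I2) (simp add: abs_mult mult.commute)
qed (use assms in measurable)

lemma integral_abs_le_sqrt_integral_square:
  fixes g :: "'a \<Rightarrow> real"
  assumes M: "finite_measure M" "measure M (space M) = 1"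
    and g: "g \<in> borel_measurable M" "integrable M (\<lambda>x. (g x)\<^sup>2)"
  shows "(\<integral>x. \<bar>g x\<bar> \<partial>M) \<le> sqrt (\<integral>x. (g x)\<^sup>2 \<partial>M)"
proof -
  define c where "c = (\<integral>x. \<bar>g x\<bar> \<partial>M)"
  have int: "integrable M (\<lambda>x. \<bar>g x\<bar>)"
    using finite_measure.square_integrable_imp_integrable[OF M(1) g] by simp
  have "0 \<le> (\<integral>x. (\<bar>g x\<bar> - c)\<^sup>2 \<partial>M)" by simp
  also have "\<dots> = (\<integral>x. (g x)\<^sup>2 - 2 * c * \<bar>g x\<bar> + c\<^sup>2 \<partial>M)"
    by (simp add: power2_eq_square algebra_simps)
  also have "\<dots> = (\<integral>x. (g x)\<^sup>2 \<partial>M) - 2 * c * c + c\<^sup>2"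
    using int g(2) M
    by (simp add: Bochner_Integration.integral_add Bochner_Integration.integral_diff
        finite_measure.integrable_const c_def del: power2_abs)
  finally have "c\<^sup>2 \<le> (\<integral>x. (g x)\<^sup>2 \<partial>M)" by (simp add: power2_eq_square)
  moreover have "0 \<le> c" unfolding c_def by simp
  ultimately show ?thesis unfolding c_def[symmetric] by (simp add: real_le_rsqrt)
qed

lemma tensor_measurable:
  "(\<And>i. smooth_real (w i)) \<Longrightarrow> tensor w \<in> borel_measurable (lebesgue_on (unit_cube :: (real^'n::finite) set))"
  by (intro continuous_imp_measurable_on_sets_lebesgue continuous_on_tensor sets_lebesgue_unit_cube)

lemma tensor_bound_on_unit_cube:
  assumes "\<And>i t. t \<in> {0..1} \<Longrightarrow> \<bar>w i t\<bar> \<le> B i" "x \<in> unit_cube"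
  shows "\<bar>tensor w x\<bar> \<le> (\<Prod>i\<in>UNIV. B i)"
proof -
  have "x$i \<in> {0..1}" for i using assms(2) by (simp add: unit_cube_def mem_box_cart)
  then show ?thesis
    unfolding tensor_def abs_prod by (intro prod_mono) (auto intro: assms(1))
qed

lemma integrable_times_tensor:
  fixes f :: "real^'n::finite \<Rightarrow> real"
  assumes "integrable (lebesgue_on unit_cube) f" "\<And>i. smooth_real (w i)"
  shows "integrable (lebesgue_on unit_cube) (\<lambda>x. f x * tensor w x)"
proof -
  have "compact (unit_cube :: (real^'n) set)" by (simp add: unit_cube_def)
  then obtain K where "K \<ge> 0" "\<And>x. x \<in> unit_cube \<Longrightarrow> norm (tensor w x) \<le> K"
    by (rule continuous_on_compact_bound[OF _ continuous_on_tensor[of w, OF assms(2)]]) blast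
  then show ?thesis
    by (intro integrable_mult_bounded[OF assms(1) tensor_measurable[OF assms(2)]]) auto
qed

lemma integral_tensor_tendsto:
  fixes f :: "real^'n::finite \<Rightarrow> real"
  assumes f: "integrable (lebesgue_on unit_cube) f"
    and u: "\<And>m i. smooth_real (u m i)" and v: "\<And>i. smooth_real (v i)"
    and B: "\<And>m i t. t \<in> {0..1} \<Longrightarrow> \<bar>u m i t\<bar> \<le> B i"
    and lim: "\<And>i t. 0 < t \<Longrightarrow> t < 1 \<Longrightarrow> eventually (\<lambda>m. u m i t = v i t) sequentially"
  shows "(\<lambda>m. \<integral>x. f x * tensor (u m) x \<partial>lebesgue_on unit_cube)
      \<longlonglongrightarrow> (\<integral>x. f x * tensor v x \<partial>lebesgue_on unit_cube)"
proof (rule integral_dominated_convergence[where w="\<lambda>x. \<bar>f x\<bar> * (\<Prod>i\<in>UNIV. B i)"])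
  show "(\<lambda>x. f x * tensor v x) \<in> borel_measurable (lebesgue_on unit_cube)"
    "(\<lambda>x. f x * tensor (u m) x) \<in> borel_measurable (lebesgue_on unit_cube)" for m
    using f tensor_measurable[OF v] tensor_measurable[OF u] by measurable
  show "integrable (lebesgue_on unit_cube) (\<lambda>x. \<bar>f x\<bar> * (\<Prod>i\<in>UNIV. B i))"
    using f by (intro integrable_mult_left integrable_abs)
  show "AE x in lebesgue_on unit_cube. norm (f x * tensor (u m) x) \<le> \<bar>f x\<bar> * (\<Prod>i\<in>UNIV. B i)" for m
    using tensor_bound_on_unit_cube[of "u m" B, OF B]
    by (intro AE_I2) (simp add: abs_mult mult_left_mono)
  have conv: "(\<lambda>m. tensor (u m) x) \<longlonglongrightarrow> tensor v x" if "x \<in> box 0 1" for x :: "real^'n"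
  proof -
    have "\<forall>i. 0 < x$i \<and> x$i < 1" using that by (simp add: mem_box_cart)
    then have "eventually (\<lambda>m. \<forall>i. u m i (x$i) = v i (x$i)) sequentially"
      using lim by (simp add: eventually_all_finite)
    then have "eventually (\<lambda>m. tensor (u m) x = tensor v x) sequentially"
      by eventually_elim (simp add: tensor_def)
    then show ?thesis by (rule tendsto_eventually)
  qed
  show "AE x in lebesgue_on unit_cube. (\<lambda>m. f x * tensor (u m) x) \<longlonglongrightarrow> f x * tensor v x"
    using AE_open_unit_cube by eventually_elim (auto intro: tendsto_mult_left conv)
qed

lemma integral_L2_times_tensor_le:
  fixes g :: "real^'n::finite \<Rightarrow> real"
  assumes g: "L2_cube g" and w: "\<And>i. smooth_real (w i)"
    and B: "\<And>i t. t \<in> {0..1} \<Longrightarrow> \<bar>w i t\<bar> \<le> B i"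
  shows "\<bar>\<integral>x. g x * tensor w x \<partial>lebesgue_on unit_cube\<bar>
    \<le> (\<Prod>i\<in>UNIV. B i) * sqrt (\<integral>x. (g x)\<^sup>2 \<partial>lebesgue_on unit_cube)"
proof -
  have gi: "integrable (lebesgue_on unit_cube) g" by (rule L2_cube_integrable[OF g])
  have "0 \<le> (\<Prod>i\<in>UNIV. B i)" using B[of 0] by (intro prod_nonneg) (smt (verit) atLeastAtMost_iff)
  have "\<bar>\<integral>x. g x * tensor w x \<partial>lebesgue_on unit_cube\<bar>
      \<le> (\<integral>x. \<bar>g x * tensor w x\<bar> \<partial>lebesgue_on unit_cube)"
    by (rule integral_abs_bound)
  also have "\<dots> \<le> (\<integral>x. (\<Prod>i\<in>UNIV. B i) * \<bar>g x\<bar> \<partial>lebesgue_on unit_cube)"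
  proof (rule integral_mono)
    have "integrable (lebesgue_on unit_cube) (\<lambda>x. g x * tensor w x)"
      by (rule integrable_mult_bounded[OF gi tensor_measurable[of w, OF w]])
        (use tensor_bound_on_unit_cube[of w B, OF B] in simp)
    then show "integrable (lebesgue_on unit_cube) (\<lambda>x. \<bar>g x * tensor w x\<bar>)"
      by (rule integrable_abs)
    show "\<bar>g x * tensor w x\<bar> \<le> (\<Prod>i\<in>UNIV. B i) * \<bar>g x\<bar>"
      if "x \<in> space (lebesgue_on unit_cube)" for x
      using tensor_bound_on_unit_cube[of w B, OF B, of x] that
      by (simp add: abs_mult mult.commute mult_left_mono)
  qed (use gi in simp)
  also have "\<dots> = (\<Prod>i\<in>UNIV. B i) * (\<integral>x. \<bar>g x\<bar> \<partial>lebesgue_on unit_cube)" by simp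
  also have "\<dots> \<le> (\<Prod>i\<in>UNIV. B i) * sqrt (\<integral>x. (g x)\<^sup>2 \<partial>lebesgue_on unit_cube)"
    using g \<open>0 \<le> (\<Prod>i\<in>UNIV. B i)\<close> unfolding L2_cube_def
    by (intro mult_left_mono integral_abs_le_sqrt_integral_square finite_measure_unit_cube
        measure_unit_cube) auto
  finally show ?thesis .
qed

section \<open>Weak mixed derivatives of tensor products\<close>

lemma is_weak_mixed_D2_weak_mixed_D2: "H2mix f \<Longrightarrow> is_weak_mixed_D2 e f (weak_mixed_D2 e f)"
  unfolding H2mix_def weak_mixed_D2_def by (metis someI_ex)

lemma H2mix_norm_nonneg: "H2mix_norm f \<ge> 0"
  unfolding H2mix_norm_def by (intro real_sqrt_ge_zero sum_nonneg integral_nonneg_AE) simp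

lemma L2_norm_weak_mixed_D2_le:
  "sqrt (\<integral>x. (weak_mixed_D2 e f x)\<^sup>2 \<partial>lebesgue_on unit_cube) \<le> H2mix_norm f"
  unfolding H2mix_norm_def
  by (intro real_sqrt_le_mono member_le_sum integral_nonneg_AE) simp_all

lemma weak_mixed_D2_test_tensor:
  assumes W: "is_weak_mixed_D2 e f g" and u: "\<And>i. smooth_real (u i)"
    and d: "0 < d" "d < 1/2" and supp: "\<And>i t. t \<le> d \<or> t \<ge> 1 - d \<Longrightarrow> u i t = 0"
  shows "(\<integral>x. f x * tensor (\<lambda>i. if i \<in> e then deriv (deriv (u i)) else u i) x \<partial>lebesgue_on unit_cube)
       = (\<integral>x. g x * tensor u x \<partial>lebesgue_on unit_cube)"
proof -
  have "test_fun (tensor u)" by (rule test_fun_tensor[OF u d supp])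
  from W[unfolded is_weak_mixed_D2_def, THEN conjunct2, rule_format, OF this]
  show ?thesis unfolding mixed_D2_tensor[OF u] by (elim conjE)
qed

lemma weak_mixed_D2_cutoff_tensor:
  assumes W: "is_weak_mixed_D2 e f g" and v: "\<And>i. smooth_real (v i)" and n: "n > 2"
  shows "(\<integral>x. f x * tensor (\<lambda>i. if i \<in> e then deriv (deriv (\<lambda>s. v i s * plateau n s))
        else (\<lambda>s. v i s * plateau n s)) x \<partial>lebesgue_on unit_cube)
    = (\<integral>x. g x * tensor (\<lambda>i s. v i s * plateau n s) x \<partial>lebesgue_on unit_cube)"
proof (rule weak_mixed_D2_test_tensor[OF W])
  show "smooth_real (\<lambda>s. v i s * plateau n s)" for i
    by (intro smooth_real_mult v smooth_real_plateau)
  show "0 < 1 / n" "1 / n < 1 / 2" using n by auto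
  show "v i t * plateau n t = 0" if "t \<le> 1 / n \<or> 1 - 1 / n \<le> t" for i t
    using plateau_eq_0[OF _ that] n by simp
qed

text \<open>The weak identity only covers test functions. Multiplying \<open>v\<close> by the plateaus turns it into
  test functions whose second derivatives stay uniformly bounded (this is where the boundary
  conditions enter), so both sides pass to the limit by dominated convergence.\<close>

lemma weak_mixed_D2_tensor:
  fixes f g :: "real^'n::finite \<Rightarrow> real"
  assumes W: "is_weak_mixed_D2 e f g" and f: "L2_cube f" and v: "\<And>i. smooth_real (v i)"
    and bc: "\<And>i. i \<in> e \<Longrightarrow> v i 0 = 0 \<and> deriv (v i) 0 = 0 \<and> v i 1 = 0 \<and> deriv (v i) 1 = 0"
  shows "(\<integral>x. f x * tensor (\<lambda>i. if i \<in> e then deriv (deriv (v i)) else v i) x \<partial>lebesgue_on unit_cube)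
       = (\<integral>x. g x * tensor v x \<partial>lebesgue_on unit_cube)"
proof -
  define D where "D = (\<lambda>w i. if i \<in> e then deriv (deriv (w i)) else w i :: real \<Rightarrow> real)"
  define u where "u = (\<lambda>m i s. v i s * plateau (Suc m) s)"
  have u: "smooth_real (u m i)" for m i
    unfolding u_def by (intro smooth_real_mult v smooth_real_plateau)
  then have Du: "smooth_real (D (u m) i)" for m i by (simp add: D_def smooth_real_deriv)
  have Dv: "smooth_real (D v i)" for i by (simp add: D_def smooth_real_deriv v)
  have "\<exists>B. \<forall>n t. t \<in> {0..1} \<longrightarrow> \<bar>v i t * plateau n t\<bar> \<le> B" for i
    by (metis cutoff_bounded[OF v])
  then obtain B where B: "\<And>m i t. t \<in> {0..1} \<Longrightarrow> \<bar>u m i t\<bar> \<le> B i" unfolding u_def by metis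
  have "\<exists>K. \<forall>m t. t \<in> {0..1} \<longrightarrow> \<bar>D (u m) i t\<bar> \<le> K" for i
  proof (cases "i \<in> e")
    case True
    then obtain K where "\<And>n t. n > 0 \<Longrightarrow> t \<in> {0..1} \<Longrightarrow>
        \<bar>deriv (deriv (\<lambda>s. v i s * plateau n s)) t\<bar> \<le> K"
      using cutoff_deriv2_bounded[OF v] bc by metis
    then have "\<forall>m t. t \<in> {0..1} \<longrightarrow> \<bar>D (u m) i t\<bar> \<le> K"
      using True by (simp add: D_def u_def)
    then show ?thesis ..
  qed (use B in \<open>auto simp: D_def\<close>)
  then obtain K where K: "\<And>m i t. t \<in> {0..1} \<Longrightarrow> \<bar>D (u m) i t\<bar> \<le> K i" by metis
  have conv: "eventually (\<lambda>m. u m i t = v i t \<and> D (u m) i t = D v i t) sequentially"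
    if "0 < t" "t < 1" for i t
    using cutoff_eventually_eq[OF v[of i] that] by eventually_elim (simp add: u_def D_def)
  have "(\<lambda>m. \<integral>x. f x * tensor (D (u m)) x \<partial>lebesgue_on unit_cube)
      \<longlonglongrightarrow> (\<integral>x. f x * tensor (D v) x \<partial>lebesgue_on unit_cube)"
    using integral_tensor_tendsto[of f "\<lambda>m. D (u m)" "D v" K, OF L2_cube_integrable[OF f] Du Dv K] conv
    by (simp add: eventually_conj_iff)
  moreover have "(\<lambda>m. \<integral>x. f x * tensor (D (u m)) x \<partial>lebesgue_on unit_cube)
      \<longlonglongrightarrow> (\<integral>x. g x * tensor v x \<partial>lebesgue_on unit_cube)"
  proof (rule Lim_transform_eventually)
    have "L2_cube g" using W by (simp add: is_weak_mixed_D2_def)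
    then show "(\<lambda>m. \<integral>x. g x * tensor (u m) x \<partial>lebesgue_on unit_cube)
        \<longlonglongrightarrow> (\<integral>x. g x * tensor v x \<partial>lebesgue_on unit_cube)"
      using integral_tensor_tendsto[of g u v B, OF L2_cube_integrable u v B] conv
      by (simp add: eventually_conj_iff)
    show "eventually (\<lambda>m. (\<integral>x. g x * tensor (u m) x \<partial>lebesgue_on unit_cube)
        = (\<integral>x. f x * tensor (D (u m)) x \<partial>lebesgue_on unit_cube)) sequentially"
      using eventually_ge_at_top[of 2]
      by eventually_elim (simp add: u_def D_def weak_mixed_D2_cutoff_tensor[OF W v])
  qed
  ultimately show ?thesis unfolding D_def by (rule LIMSEQ_unique)
qed

section \<open>Folding the cube by the tent map\<close>

definition tent_branch :: "'n::finite set \<Rightarrow> real^'n \<Rightarrow> real^'n" where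
  "tent_branch s x = (\<chi> i. if i \<in> s then (1 - x$i) / 2 else (1 + x$i) / 2)"

definition subcube :: "'n::finite set \<Rightarrow> (real^'n) set" where
  "subcube s = cbox (\<chi> i. if i \<in> s then 0 else 1/2) (\<chi> i. if i \<in> s then 1/2 else 1)"

lemma tent_tent_branch: "x \<in> unit_cube \<Longrightarrow> tent f (tent_branch s x) = f x"
proof -
  assume "x \<in> unit_cube"
  then have "0 \<le> x$i" for i by (simp add: unit_cube_def mem_box_cart)
  then have "(\<chi> i. \<bar>2 * tent_branch s x $ i - 1\<bar>) = x"
    by (simp add: vec_eq_iff tent_branch_def) (auto simp: field_simps)
  then show ?thesis by (simp add: tent_def)
qed

lemma has_integral_tent_branch:
  fixes h :: "real^'n::finite \<Rightarrow> complex"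
  assumes "(h has_integral J) (subcube s)"
  shows "((\<lambda>x. h (tent_branch s x)) has_integral (2 ^ CARD('n) *\<^sub>R J)) unit_cube"
proof -
  define c :: "real^'n" where "c = (\<chi> i. 1/2)"
  define m where "m = (\<lambda>i. if i \<in> s then - 1/2 else 1/2 :: real)"
  define a :: "real^'n" where "a = (\<chi> i. if i \<in> s then - 1/2 else 0)"
  define b :: "real^'n" where "b = (\<chi> i. if i \<in> s then 0 else 1/2)"
  have "((\<lambda>x. h (1 *\<^sub>R x + c)) has_integral (1 / (\<bar>1\<bar> ^ DIM(real^'n))) *\<^sub>R J)
      ((\<lambda>x. (1 / 1) *\<^sub>R x + - ((1 / 1) *\<^sub>R c)) ` subcube s)"
    using assms unfolding subcube_def by (rule has_integral_affinity) simp
  moreover have "(\<lambda>x. (1 / 1) *\<^sub>R x + - ((1 / 1) *\<^sub>R c)) ` subcube s = cbox a b"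
  proof -
    have "subcube s = cbox (c + a) (c + b)"
      unfolding subcube_def by (rule arg_cong2[where f=cbox]) (simp_all add: vec_eq_iff a_def b_def c_def)
    then show ?thesis using cbox_translation[of "- c" "c + a" "c + b"] by (simp add: add.commute)
  qed
  ultimately have "((\<lambda>x. h (x + c)) has_integral J) (cbox a b)" by simp
  from has_integral_stretch_cart[OF this, of m]
  have "((\<lambda>x. h ((\<chi> k. m k * x$k) + c)) has_integral J /\<^sub>R \<bar>prod m UNIV\<bar>)
      ((\<lambda>x. \<chi> k. x$k / m k) ` cbox a b)"
    by (simp add: m_def)
  moreover have "(\<lambda>x. \<chi> k. x$k / m k) ` cbox a b = unit_cube"
  proof -
    have eq: "(\<lambda>x. \<chi> k. x$k / m k) = (\<lambda>x::real^'n. \<chi> k. (1 / m k) * x$k)"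
      by (simp add: fun_eq_iff)
    have "cbox a b \<noteq> {}" by (auto simp: interval_ne_empty_cart a_def b_def)
    then show ?thesis
      unfolding eq image_stretch_interval_cart unit_cube_def
      by (simp, intro arg_cong2[where f=cbox]) (auto simp: vec_eq_iff m_def a_def b_def)
  qed
  moreover have "\<bar>prod m UNIV\<bar> = (1/2) ^ CARD('n)"
  proof -
    have "\<bar>prod m UNIV\<bar> = (\<Prod>i\<in>(UNIV :: 'n set). 1/2 :: real)"
      unfolding abs_prod by (intro prod.cong) (auto simp: m_def)
    then show ?thesis by simp
  qed
  moreover have "(\<chi> k. m k * x$k) + c = tent_branch s x" for x
    by (simp add: vec_eq_iff m_def c_def tent_branch_def field_simps)
  ultimately have "((\<lambda>x. h (tent_branch s x)) has_integral J /\<^sub>R (1/2) ^ CARD('n)) unit_cube"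
    by (simp only:)
  then show ?thesis by (simp add: power_one_over)
qed

lemma subcube_subset: "subcube s \<subseteq> unit_cube"
proof
  fix x assume x: "x \<in> subcube s"
  have "0 \<le> x$i \<and> x$i \<le> 1" for i
    using x[unfolded subcube_def mem_box_cart, rule_format, of i] by (auto split: if_splits)
  then show "x \<in> unit_cube" by (simp add: unit_cube_def mem_box_cart)
qed

lemma subcube_nonempty: "subcube s \<noteq> {}"
  by (auto simp: subcube_def interval_ne_empty_cart)

lemma interior_subcube_disjoint:
  assumes "s \<noteq> s'" shows "interior (subcube s) \<inter> interior (subcube s') = {}"
proof (rule ccontr)
  obtain i where i: "(i \<in> s \<and> i \<notin> s') \<or> (i \<notin> s \<and> i \<in> s')" using assms by blast
  assume "interior (subcube s) \<inter> interior (subcube s') \<noteq> {}"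
  then obtain x where "x \<in> interior (subcube s)" "x \<in> interior (subcube s')" by blast
  then show False using i by (auto simp: subcube_def interior_cbox mem_box_cart dest!: spec[of _ i])
qed

lemma Union_range_subcube: "\<Union> (range subcube) = (unit_cube :: (real^'n::finite) set)"
proof
  show "(unit_cube :: (real^'n) set) \<subseteq> \<Union> (range subcube)"
  proof
    fix x :: "real^'n" assume "x \<in> unit_cube"
    then have "x \<in> subcube {i. x$i \<le> 1/2}" by (auto simp: subcube_def unit_cube_def mem_box_cart)
    then show "x \<in> \<Union> (range subcube)" by blast
  qed
qed (use subcube_subset in blast)

lemma subcube_division: "range subcube division_of (unit_cube :: (real^'n::finite) set)"
proof (rule division_ofI)
  show "finite (range (subcube :: 'n set \<Rightarrow> _))" by simp
  fix K assume K: "K \<in> range subcube"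
  then show "K \<subseteq> unit_cube" using subcube_subset by blast
  show "K \<noteq> {}" using K subcube_nonempty by blast
  show "\<exists>a b. K = cbox a b" using K by (auto simp: subcube_def)
  fix K' assume "K' \<in> range subcube" "K \<noteq> K'"
  then show "interior K \<inter> interior K' = {}"
    using K interior_subcube_disjoint by (metis rangeE)
qed (rule Union_range_subcube)

lemma inj_subcube: "inj (subcube :: 'n::finite set \<Rightarrow> _)"
proof (rule injI)
  fix s s' :: "'n set" assume "subcube s = subcube s'"
  then have "(\<lambda>i. if i \<in> s then 0 else 1/2) = (\<lambda>i. if i \<in> s' then (0::real) else 1/2)"
    using subcube_nonempty[of s] unfolding subcube_def eq_cbox by (simp add: vec_eq_iff)
  then show "s = s'" by (auto simp: fun_eq_iff split: if_splits)
qed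

lemma has_integral_sum_tent_branch:
  fixes u :: "real^'n::finite \<Rightarrow> complex"
  assumes u: "(u has_integral I) unit_cube"
  shows "((\<lambda>x. \<Sum>s\<in>UNIV. u (tent_branch s x)) has_integral 2 ^ CARD('n) * I) unit_cube"
proof -
  have "u integrable_on unit_cube" using u by blast
  then have "(u has_integral (\<Sum>K\<in>range subcube. integral K u)) unit_cube"
    by (rule has_integral_combine_division_topdown[OF _ subcube_division]) simp
  then have I: "I = (\<Sum>s\<in>UNIV. integral (subcube s) u)"
    using has_integral_unique[OF u] by (simp add: sum.reindex[OF inj_subcube])
  have "((\<lambda>x. u (tent_branch s x)) has_integral (2 ^ CARD('n) *\<^sub>R integral (subcube s) u)) unit_cube"
    for s
  proof (rule has_integral_tent_branch, rule integrable_integral)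
    show "u integrable_on subcube s"
      using \<open>u integrable_on unit_cube\<close> subcube_subset[of s] unfolding subcube_def
      by (rule integrable_on_subcbox)
  qed
  then show ?thesis
    using has_integral_sum[of UNIV "\<lambda>s x. u (tent_branch s x)"]
    by (simp add: I scaleR_conv_of_real sum_distrib_left)
qed

definition tent_kernel :: "int^'n::finite \<Rightarrow> real^'n \<Rightarrow> real" where
  "tent_kernel k = tensor (\<lambda>i t. cos (pi * k$i) * cos (pi * k$i * t))"

lemma tent_kernel_measurable: "tent_kernel k \<in> borel_measurable (lebesgue_on unit_cube)"
  unfolding tent_kernel_def by (intro tensor_measurable smooth_real_cos_factor)

lemma abs_tent_kernel_le_1: "\<bar>tent_kernel (k :: int^'n::finite) x\<bar> \<le> 1"
proof -
  have "\<bar>tent_kernel k x\<bar> \<le> (\<Prod>i\<in>(UNIV :: 'n set). 1)"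
    unfolding tent_kernel_def tensor_def abs_prod
    by (intro prod_mono) (simp add: abs_mult mult_le_one)
  then show ?thesis by simp
qed

lemma sum_cis_tent_branch:
  fixes k :: "int^'n::finite"
  shows "(\<Sum>s\<in>UNIV. cis (- 2 * pi * (\<Sum>i\<in>UNIV. of_int (k$i) * tent_branch s x $ i)))
     = 2 ^ CARD('n) * complex_of_real (tent_kernel k x)"
proof -
  define a where "a = (\<lambda>i. cis (- 2 * pi * (of_int (k$i) * ((1 - x$i) / 2))))"
  define b where "b = (\<lambda>i. cis (- 2 * pi * (of_int (k$i) * ((1 + x$i) / 2))))"
  have "cis (- 2 * pi * (\<Sum>i\<in>UNIV. of_int (k$i) * tent_branch s x $ i))
      = (\<Prod>i\<in>UNIV. cis (- 2 * pi * (of_int (k$i) * tent_branch s x $ i)))" for s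
    by (simp add: sum_distrib_left cis_conv_exp exp_sum)
  also have "\<dots> s = (\<Prod>i\<in>UNIV. if i \<in> s then a i else b i)" for s
    by (rule prod.cong) (auto simp: a_def b_def tent_branch_def)
  finally have "(\<Sum>s\<in>UNIV. cis (- 2 * pi * (\<Sum>i\<in>UNIV. of_int (k$i) * tent_branch s x $ i)))
      = (\<Sum>s\<in>Pow UNIV. prod a s * prod b (UNIV - s))"
    by (simp add: prod.If_cases Int_absorb1 Compl_eq_Diff_UNIV)
  also have "\<dots> = (\<Prod>i\<in>UNIV. a i + b i)" by (rule prod_add[symmetric]) simp
  also have "\<dots> = (\<Prod>i\<in>UNIV. 2 * complex_of_real (cos (pi * k$i) * cos (pi * k$i * x$i)))"
  proof (rule prod.cong)
    fix i
    have "sin (pi * of_int (k$i)) = 0" by (simp add: sin_times_pi_eq_0 mult.commute)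
    then show "a i + b i = 2 * complex_of_real (cos (pi * k$i) * cos (pi * k$i * x$i))"
      by (simp add: a_def b_def complex_eq_iff cos_diff sin_diff cos_add sin_add
          algebra_simps add_divide_distrib diff_divide_distrib)
  qed simp
  also have "\<dots> = 2 ^ CARD('n) * complex_of_real (tent_kernel k x)"
    by (simp add: prod.distrib tent_kernel_def tensor_def)
  finally show ?thesis .
qed

lemma fourier_coeff_tent:
  fixes f :: "real^'n::finite \<Rightarrow> real" and k :: "int^'n"
  assumes f: "integrable (lebesgue_on unit_cube) f"
    and int: "integrable (lebesgue_on unit_cube)
       (\<lambda>x. complex_of_real (tent f x) * cis (- 2 * pi * (\<Sum>i\<in>UNIV. of_int (k$i) * x$i)))"
  shows "fourier_coeff (tent f) k
    = complex_of_real (\<integral>x. f x * tent_kernel k x \<partial>lebesgue_on unit_cube)"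
proof -
  define u where "u = (\<lambda>x. complex_of_real (tent f x) * cis (- 2 * pi * (\<Sum>i\<in>UNIV. of_int (k$i) * x$i)))"
  have "(u has_integral fourier_coeff (tent f) k) unit_cube"
    unfolding fourier_coeff_def u_def
    by (rule has_integral_integral_lebesgue_on[OF int sets_lebesgue_unit_cube])
  from has_integral_sum_tent_branch[OF this]
  have folded: "((\<lambda>x. 2 ^ CARD('n) * complex_of_real (f x * tent_kernel k x)) has_integral
      2 ^ CARD('n) * fourier_coeff (tent f) k) unit_cube"
  proof (rule has_integral_eq[rotated])
    fix x :: "real^'n" assume "x \<in> unit_cube"
    then have "(\<Sum>s\<in>UNIV. u (tent_branch s x)) = complex_of_real (f x)
        * (\<Sum>s\<in>UNIV. cis (- 2 * pi * (\<Sum>i\<in>UNIV. of_int (k$i) * tent_branch s x $ i)))"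
      by (simp add: u_def tent_tent_branch sum_distrib_left)
    then show "(\<Sum>s\<in>UNIV. u (tent_branch s x)) = 2 ^ CARD('n) * complex_of_real (f x * tent_kernel k x)"
      by (simp only: sum_cis_tent_branch) simp
  qed
  have "integrable (lebesgue_on unit_cube) (\<lambda>x. f x * tent_kernel k x)"
    using integrable_mult_bounded[OF f tent_kernel_measurable] abs_tent_kernel_le_1 by blast
  from has_integral_linear[OF has_integral_integral_lebesgue_on[OF this sets_lebesgue_unit_cube]
      bounded_linear_of_real]
  have "((\<lambda>x. complex_of_real (f x * tent_kernel k x)) has_integral
      complex_of_real (\<integral>x. f x * tent_kernel k x \<partial>lebesgue_on unit_cube)) unit_cube"
    by (simp only: o_def)
  from has_integral_unique[OF folded has_integral_mult_right[OF this]] show ?thesis by simp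
qed

section \<open>Splitting the cosine kernel\<close>

lemma inverse_pi_square_le:
  fixes n :: int
  assumes "n \<noteq> 0"
  shows "12 / (pi * n)\<^sup>2 \<le> 10 / (1 + \<bar>real_of_int n\<bar>)\<^sup>2"
proof -
  have n: "1 \<le> \<bar>real_of_int n\<bar>" and n2: "(real_of_int n)\<^sup>2 > 0" using assms by auto
  have "(3 * \<bar>real_of_int n\<bar>)\<^sup>2 \<le> (pi * \<bar>real_of_int n\<bar>)\<^sup>2"
    using pi_gt3 by (intro power_mono mult_right_mono) auto
  then have "9 * (real_of_int n)\<^sup>2 \<le> (pi * n)\<^sup>2" by (simp add: power_mult_distrib)
  then have "12 / (pi * n)\<^sup>2 \<le> 12 / (9 * (real_of_int n)\<^sup>2)"
    using n2 by (intro divide_left_mono) auto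
  also have "\<dots> \<le> 10 / (4 * (real_of_int n)\<^sup>2)" using n2 by (simp add: field_simps)
  also have "\<dots> \<le> 10 / (1 + \<bar>real_of_int n\<bar>)\<^sup>2"
  proof (intro divide_left_mono)
    have "(1 + \<bar>real_of_int n\<bar>)\<^sup>2 \<le> (2 * \<bar>real_of_int n\<bar>)\<^sup>2"
      using n by (intro power_mono) auto
    then show "(1 + \<bar>real_of_int n\<bar>)\<^sup>2 \<le> 4 * (real_of_int n)\<^sup>2" by (simp add: power_mult_distrib)
  qed (use n in auto)
  finally show ?thesis .
qed

lemma abs_hermite_cubic_le_1: "t \<in> {0..1} \<Longrightarrow> \<bar>3 * t\<^sup>2 - 2 * t ^ 3\<bar> \<le> (1::real)"
proof -
  assume t: "t \<in> {0..1}"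
  have "0 \<le> (1 - t)\<^sup>2 * (1 + 2 * t)" "0 \<le> t\<^sup>2 * (3 - 2 * t)" using t by auto
  then show ?thesis by (simp add: abs_le_iff algebra_simps power2_eq_square power3_eq_cube)
qed

lemma derivs_cos_corrected:
  fixes c D w :: real
  assumes "w \<noteq> 0"
  defines "R \<equiv> \<lambda>t. c / w\<^sup>2 * (1 - cos (w * t)) - D * (3 * t\<^sup>2 - 2 * t ^ 3)"
  shows "deriv R = (\<lambda>t. c * sin (w * t) / w - D * (6 * t - 6 * t\<^sup>2))"
    and "deriv (deriv R) = (\<lambda>t. c * cos (w * t) - D * (6 - 12 * t))"
proof -
  have "(R has_real_derivative c * sin (w * t) / w - D * (6 * t - 6 * t\<^sup>2)) (at t)" for t
    unfolding R_def using assms(1)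
    by (auto intro!: derivative_eq_intros simp: field_simps power2_eq_square power3_eq_cube)
  then show dR: "deriv R = (\<lambda>t. c * sin (w * t) / w - D * (6 * t - 6 * t\<^sup>2))"
    by (intro ext DERIV_imp_deriv)
  have "((\<lambda>t. c * sin (w * t) / w - D * (6 * t - 6 * t\<^sup>2)) has_real_derivative
      c * cos (w * t) - D * (6 - 12 * t)) (at t)" for t
    using assms(1) by (auto intro!: derivative_eq_intros simp: field_simps power2_eq_square)
  then show "deriv (deriv R) = (\<lambda>t. c * cos (w * t) - D * (6 - 12 * t))"
    unfolding dR by (intro ext DERIV_imp_deriv)
qed

lemma abs_cos_corrected_le:
  fixes c D w t :: real
  assumes "\<bar>c\<bar> \<le> 1" "\<bar>D\<bar> \<le> 2 / w\<^sup>2" "t \<in> {0..1}"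
  shows "\<bar>c / w\<^sup>2 * (1 - cos (w * t)) - D * (3 * t\<^sup>2 - 2 * t ^ 3)\<bar> \<le> 4 / w\<^sup>2"
proof -
  have "\<bar>c\<bar> / w\<^sup>2 \<le> 1 / w\<^sup>2" using assms(1) by (rule divide_right_mono) simp
  then have "\<bar>c / w\<^sup>2 * (1 - cos (w * t))\<bar> \<le> 1 / w\<^sup>2 * 2"
    unfolding abs_mult abs_div by (intro mult_mono) (auto simp: abs_le_iff)
  moreover have "\<bar>D * (3 * t\<^sup>2 - 2 * t ^ 3)\<bar> \<le> 2 / w\<^sup>2 * 1"
    unfolding abs_mult using assms(2) abs_hermite_cubic_le_1[OF assms(3)] by (intro mult_mono) auto
  ultimately show ?thesis
    using abs_triangle_ineq4[of "c / w\<^sup>2 * (1 - cos (w * t))" "D * (3 * t\<^sup>2 - 2 * t ^ 3)"]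
    by (simp add: add_divide_distrib[symmetric])
qed

text \<open>The correction \<open>D (3t\<^sup>2 - 2t\<^sup>3)\<close> is the cubic with zero slopes at both ends that makes
  \<open>R\<close> vanish at \<open>1\<close>; its second derivative is the affine part \<open>A\<close>.\<close>

lemma cos_factor_decomposition:
  fixes n :: int
  obtains A R where "smooth_real A" "smooth_real R"
    "\<And>t. A t + deriv (deriv R) t = cos (pi * n) * cos (pi * n * t)"
    "R 0 = 0" "deriv R 0 = 0" "R 1 = 0" "deriv R 1 = 0"
    "\<And>t. t \<in> {0..1} \<Longrightarrow> \<bar>A t\<bar> \<le> 10 / (1 + \<bar>real_of_int n\<bar>)\<^sup>2"
    "\<And>t. t \<in> {0..1} \<Longrightarrow> \<bar>R t\<bar> \<le> 10 / (1 + \<bar>real_of_int n\<bar>)\<^sup>2"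
proof (cases "n = 0")
  case True
  then show thesis by (intro that[of "\<lambda>t. 1" "\<lambda>t. 0"]) (simp_all add: smooth_real_const)
next
  case False
  define w where "w = pi * n"
  define c where "c = cos w"
  define D where "D = (c - c\<^sup>2) / w\<^sup>2"
  define R where "R = (\<lambda>t. c / w\<^sup>2 * (1 - cos (w * t)) - D * (3 * t\<^sup>2 - 2 * t ^ 3))"
  define A where "A = (\<lambda>t. D * (6 - 12 * t))"
  have "w \<noteq> 0" using False by (simp add: w_def)
  note dR = derivs_cos_corrected[OF this, of c D, folded R_def]
  have "sin w = 0" by (simp add: w_def sin_times_pi_eq_0 mult.commute)
  have small: "12 / w\<^sup>2 \<le> 10 / (1 + \<bar>real_of_int n\<bar>)\<^sup>2"
    unfolding w_def by (rule inverse_pi_square_le[OF False])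
  have "\<bar>c\<bar> \<le> 1" by (simp add: c_def)
  moreover have "\<bar>c\<^sup>2\<bar> \<le> 1"
    using power_le_one[OF abs_ge_zero \<open>\<bar>c\<bar> \<le> 1\<close>, of 2] by (simp add: power_abs)
  ultimately have "\<bar>c - c\<^sup>2\<bar> \<le> 2" using abs_triangle_ineq4[of c "c\<^sup>2"] by linarith
  then have D: "\<bar>D\<bar> \<le> 2 / w\<^sup>2" by (simp add: D_def abs_div divide_right_mono)
  show thesis
  proof (rule that)
    show "smooth_real A" unfolding A_def
      by (intro smooth_real_mult smooth_real_diff smooth_real_const smooth_real_ident)
    show "smooth_real R" unfolding R_def
      by (intro smooth_real_mult smooth_real_diff smooth_real_const smooth_real_ident
          smooth_real_power smooth_real_cos_factor[of 1, simplified])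
    show "A t + deriv (deriv R) t = cos (pi * n) * cos (pi * n * t)" for t
      by (simp add: A_def dR(2) c_def w_def)
    show "R 0 = 0" by (simp add: R_def)
    show "deriv R 0 = 0" "deriv R 1 = 0" using \<open>sin w = 0\<close> by (simp_all add: dR(1))
    show "R 1 = 0" using \<open>w \<noteq> 0\<close> by (simp add: R_def D_def c_def field_simps power2_eq_square)
    fix t :: real assume t: "t \<in> {0..1}"
    have "\<bar>A t\<bar> \<le> 2 / w\<^sup>2 * 6"
      unfolding A_def abs_mult using D t by (intro mult_mono) auto
    then show "\<bar>A t\<bar> \<le> 10 / (1 + \<bar>real_of_int n\<bar>)\<^sup>2" using small by simp
    have "\<bar>R t\<bar> \<le> 4 / w\<^sup>2" unfolding R_def by (rule abs_cos_corrected_le[OF \<open>\<bar>c\<bar> \<le> 1\<close> D t])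
    also have "\<dots> \<le> 12 / w\<^sup>2" by (simp add: divide_right_mono)
    finally show "\<bar>R t\<bar> \<le> 10 / (1 + \<bar>real_of_int n\<bar>)\<^sup>2" using small by simp
  qed
qed

lemma tent_kernel_expansion:
  fixes k :: "int^'n::finite"
  obtains V where "\<And>e i. smooth_real (V e i)"
    "\<And>e i t. t \<in> {0..1} \<Longrightarrow> \<bar>V e i t\<bar> \<le> 10 / (1 + \<bar>real_of_int (k$i)\<bar>)\<^sup>2"
    "\<And>e i. i \<in> e \<Longrightarrow> V e i 0 = 0 \<and> deriv (V e i) 0 = 0 \<and> V e i 1 = 0 \<and> deriv (V e i) 1 = 0"
    "\<And>x. tent_kernel k x
      = (\<Sum>e\<in>UNIV. tensor (\<lambda>i. if i \<in> e then deriv (deriv (V e i)) else V e i) x)"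
proof -
  define b where "b = (\<lambda>i. 10 / (1 + \<bar>real_of_int (k$i)\<bar>)\<^sup>2)"
  have "\<exists>A R. smooth_real A \<and> smooth_real R
      \<and> (\<forall>t. A t + deriv (deriv R) t = cos (pi * k$i) * cos (pi * k$i * t))
      \<and> R 0 = 0 \<and> deriv R 0 = 0 \<and> R 1 = 0 \<and> deriv R 1 = 0
      \<and> (\<forall>t\<in>{0..1}. \<bar>A t\<bar> \<le> b i \<and> \<bar>R t\<bar> \<le> b i)" for i
  proof -
    obtain A R where "smooth_real A" "smooth_real R"
      "\<And>t. A t + deriv (deriv R) t = cos (pi * k$i) * cos (pi * k$i * t)"
      "R 0 = 0" "deriv R 0 = 0" "R 1 = 0" "deriv R 1 = 0"
      "\<And>t. t \<in> {0..1} \<Longrightarrow> \<bar>A t\<bar> \<le> b i" "\<And>t. t \<in> {0..1} \<Longrightarrow> \<bar>R t\<bar> \<le> b i"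
      unfolding b_def by (rule cos_factor_decomposition[of "k$i"]) blast
    then show ?thesis by blast
  qed
  then obtain A R where A: "\<And>i. smooth_real (A i)" "\<And>i t. t \<in> {0..1} \<Longrightarrow> \<bar>A i t\<bar> \<le> b i"
    and R: "\<And>i. smooth_real (R i)" "\<And>i t. t \<in> {0..1} \<Longrightarrow> \<bar>R i t\<bar> \<le> b i"
      "\<And>i. R i 0 = 0 \<and> deriv (R i) 0 = 0 \<and> R i 1 = 0 \<and> deriv (R i) 1 = 0"
    and AR: "\<And>i t. A i t + deriv (deriv (R i)) t = cos (pi * k$i) * cos (pi * k$i * t)"
    by metis
  show thesis
  proof (rule that[of "\<lambda>e i. if i \<in> e then R i else A i"])
    have "tent_kernel k = tensor (\<lambda>i t. deriv (deriv (R i)) t + A i t)"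
      by (simp add: tent_kernel_def AR add.commute)
    moreover have "(\<lambda>i. if i \<in> e then deriv (deriv (if i \<in> e then R i else A i)) else if i \<in> e then R i else A i)
        = (\<lambda>i. if i \<in> e then deriv (deriv (R i)) else A i)" for e
      by (simp add: fun_eq_iff)
    ultimately show "tent_kernel k x = (\<Sum>e\<in>UNIV. tensor (\<lambda>i. if i \<in> e
        then deriv (deriv (if i \<in> e then R i else A i)) else if i \<in> e then R i else A i) x)" for x
      by (simp add: tensor_add_expansion)
  qed (use A R in \<open>auto simp: b_def\<close>)
qed

lemma integral_tent_kernel_le:
  fixes f :: "real^'n::finite \<Rightarrow> real" and k :: "int^'n"
  assumes H: "H2mix f"
  shows "\<bar>\<integral>x. f x * tent_kernel k x \<partial>lebesgue_on unit_cube\<bar>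
    \<le> 2 ^ CARD('n) * (\<Prod>i\<in>UNIV. 10 / (1 + \<bar>real_of_int (k$i)\<bar>)\<^sup>2) * H2mix_norm f"
proof -
  define b where "b = (\<lambda>i. 10 / (1 + \<bar>real_of_int (k$i)\<bar>)\<^sup>2)"
  obtain V where V: "\<And>e i. smooth_real (V e i)" "\<And>e i t. t \<in> {0..1} \<Longrightarrow> \<bar>V e i t\<bar> \<le> b i"
    and bc: "\<And>e i. i \<in> e \<Longrightarrow> V e i 0 = 0 \<and> deriv (V e i) 0 = 0 \<and> V e i 1 = 0 \<and> deriv (V e i) 1 = 0"
    and G: "\<And>x. tent_kernel k x
      = (\<Sum>e\<in>UNIV. tensor (\<lambda>i. if i \<in> e then deriv (deriv (V e i)) else V e i) x)"
    unfolding b_def by (rule tent_kernel_expansion) blast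
  have f: "integrable (lebesgue_on unit_cube) f" using H by (simp add: H2mix_def L2_cube_integrable)
  have "(\<integral>x. f x * tent_kernel k x \<partial>lebesgue_on unit_cube) = (\<Sum>e\<in>UNIV.
      \<integral>x. f x * tensor (\<lambda>i. if i \<in> e then deriv (deriv (V e i)) else V e i) x \<partial>lebesgue_on unit_cube)"
    by (simp add: G sum_distrib_left integrable_times_tensor[OF f] V smooth_real_deriv)
  also have "\<dots> = (\<Sum>e\<in>UNIV. \<integral>x. weak_mixed_D2 e f x * tensor (V e) x \<partial>lebesgue_on unit_cube)"
    using H is_weak_mixed_D2_weak_mixed_D2 bc
    by (intro sum.cong weak_mixed_D2_tensor V) (auto simp: H2mix_def)
  also have "\<bar>\<dots>\<bar> \<le> (\<Sum>e\<in>(UNIV :: 'n set set). (\<Prod>i\<in>UNIV. b i) * H2mix_norm f)"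
  proof (rule order_trans[OF sum_abs sum_mono])
    fix e :: "'n set"
    have L2: "L2_cube (weak_mixed_D2 e f)"
      using is_weak_mixed_D2_weak_mixed_D2[OF H] by (simp add: is_weak_mixed_D2_def)
    have "0 \<le> (\<Prod>i\<in>UNIV. b i)" by (simp add: b_def prod_nonneg)
    from integral_L2_times_tensor_le[of _ "V e" b, OF L2 V] mult_left_mono[OF L2_norm_weak_mixed_D2_le this]
    show "\<bar>\<integral>x. weak_mixed_D2 e f x * tensor (V e) x \<partial>lebesgue_on unit_cube\<bar>
        \<le> (\<Prod>i\<in>UNIV. b i) * H2mix_norm f"
      by (rule order_trans)
  qed
  also have "\<dots> = 2 ^ CARD('n) * (\<Prod>i\<in>UNIV. b i) * H2mix_norm f"
    by (simp add: card_UNIV_set)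
  finally show ?thesis by (simp add: b_def)
qed

lemma norm_fourier_coeff_tent_le:
  fixes f :: "real^'n::finite \<Rightarrow> real" and k :: "int^'n"
  assumes "H2mix f"
  shows "cmod (fourier_coeff (tent f) k)
    \<le> 2 ^ CARD('n) * (\<Prod>i\<in>UNIV. 10 / (1 + \<bar>real_of_int (k$i)\<bar>)\<^sup>2) * H2mix_norm f"
proof (cases "integrable (lebesgue_on unit_cube)
    (\<lambda>x. complex_of_real (tent f x) * cis (- 2 * pi * (\<Sum>i\<in>UNIV. of_int (k$i) * x$i)))")
  case True
  then have "fourier_coeff (tent f) k
      = complex_of_real (\<integral>x. f x * tent_kernel k x \<partial>lebesgue_on unit_cube)"
    using assms by (intro fourier_coeff_tent) (simp_all add: H2mix_def L2_cube_integrable)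
  then show ?thesis using integral_tent_kernel_le[OF assms, of k] by simp
next
  case False
  then have "fourier_coeff (tent f) k = 0"
    unfolding fourier_coeff_def by (rule not_integrable_integral_eq)
  then show ?thesis using H2mix_norm_nonneg[of f] by (simp add: prod_nonneg)
qed

theorem corollary6p3:
  "\<exists>C>0. \<forall>f :: real^'n::finite \<Rightarrow> real. H2mix f \<longrightarrow>
     (\<forall>k :: int^'n. cmod (fourier_coeff (tent f) k) * (\<Prod>i\<in>UNIV. (1 + \<bar>real_of_int (k$i)\<bar>)\<^sup>2)
        \<le> C * H2mix_norm f)"
proof (intro exI[of _ "20 ^ CARD('n)"] conjI allI impI)
  fix f :: "real^'n \<Rightarrow> real" and k :: "int^'n"
  assume "H2mix f"
  define w where "w = (\<Prod>i\<in>UNIV. (1 + \<bar>real_of_int (k$i)\<bar>)\<^sup>2)"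
  have "w \<ge> 0" unfolding w_def by (simp add: prod_nonneg)
  have cancel: "(\<Prod>i\<in>UNIV. 10 / (1 + \<bar>real_of_int (k$i)\<bar>)\<^sup>2) * w = (\<Prod>i\<in>(UNIV :: 'n set). 10)"
    unfolding w_def prod.distrib[symmetric] by (intro prod.cong) auto
  have "cmod (fourier_coeff (tent f) k) * w
      \<le> 2 ^ CARD('n) * (\<Prod>i\<in>UNIV. 10 / (1 + \<bar>real_of_int (k$i)\<bar>)\<^sup>2) * H2mix_norm f * w"
    by (rule mult_right_mono[OF norm_fourier_coeff_tent_le[OF \<open>H2mix f\<close>] \<open>w \<ge> 0\<close>])
  also have "\<dots> = (2 * 10) ^ CARD('n) * H2mix_norm f"
    using cancel unfolding power_mult_distrib by (simp add: mult_ac)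
  finally show "cmod (fourier_coeff (tent f) k) * w \<le> 20 ^ CARD('n) * H2mix_norm f"
    by simp
qed simp

end
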